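(* Let $n>1$, let $d$ be a positive integer and let $(y_{\alpha,\beta})_{|\alpha|,|\beta|\leqslant d}$ be complex numbers. Let $K=\{z\in\mathbb{C}^n: g_i(z,\bar z)\geqslant 0,\ i=1,\dots,m\}$ and assume that one of the constraints $g_i$ is the ball constraint $R^2-|z_1|^2-\dots-|z_n|^2$ for some $R>0$. Then there exists a positive $\operatorname{rank}M_d(y)$-atomic measure $\mu$ supported on $K$ such that $$y_{\alpha,\beta}=\int_{\mathbb{C}^n} z^\alpha\bar z^\beta\,d\mu\quad\text{for all }|\alpha|,|\beta|\leqslant d$$ if and only if there exists an extension of the data to complex numbers $(y_{\alpha,\beta})_{|\alpha|,|\beta|\leqslant d+d_K}$ (agreeing with the given $y_{\alpha,\beta}$ for $|\alpha|,|\beta|\leqslant d$) such that: 1. $M_{d+d_K}(y)\succcurlyeq 0$ and $M_{d+d_K-k_i}(g_iy)\succcurlyeq 0$ for $i=1,\dots,m$; 2. $\operatorname{rank}M_{d+d_K}(y)=\operatorname{rank}M_d(y)$; 3. for all $1\leqslant i<j\leqslant n$, $$\begin{pmatrix} M_{d}(y) & M_{d}(z_i y) & M_{d}(z_j y)\\ M_{d}(\bar z_i y) & M_{d}(|z_i|^2 y) & M_{d}(z_j\bar z_i y)\\ M_{d}(\bar z_j y) & M_{d}(z_i\bar z_j y) & M_{d}(|z_j|^2 y)\end{pmatrix}\succcurlyeq 0.$$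
   Context: Multi-index notation: $z^\alpha=z_1^{\alpha_1}\cdots z_n^{\alpha_n}$ for $\alpha\in\mathbb{N}^n$, $|\alpha|=\sum_k\alpha_k$. Each $g_i=\sum_{\alpha,\beta}g_{i,\alpha,\beta}z^\alpha\bar z^\beta$ is a real-valued complex polynomial (finitely many nonzero coefficients, $\overline{g_{i,\alpha,\beta}}=g_{i,\beta,\alpha}$); $k_i=\max\{|\alpha|,|\beta|: g_{i,\alpha,\beta}\neq 0\}$ and $d_K=\max\{2,k_1,\dots,k_m\}$. The moment matrix is $M_s(y)=(y_{\alpha,\beta})_{|\alpha|,|\beta|\leqslant s}$ and, for a polynomial $g=\sum_{\gamma,\delta}g_{\gamma,\delta}z^\gamma\bar z^\delta$, the localizing matrix is $M_s(gy)=\big(\sum_{\gamma,\delta}g_{\gamma,\delta}y_{\alpha+\gamma,\beta+\delta}\big)_{|\alpha|,|\beta|\leqslant s}$ (e.g. $M_s(z_iy)=(y_{\alpha+e_i,\beta})$, $M_s(\bar z_i y)=(y_{\alpha,\beta+e_i})$, $M_s(z_j\bar z_iy)=(y_{\alpha+e_j,\beta+e_i})$). $\succcurlyeq0$ means Hermitian positive semidefinite. A positive $r$-atomic measure supported on $K$ is $\mu=\sum_{j=1}^r w_j\delta_{z^{(j)}}$ with $w_j>0$ and $r$ distinct points $z^{(j)}\in K$. *)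

theory Defs
  imports Complex_Main
begin

(* Multi-indices in N^n are lists of naturals of length n (coordinate k <-> index k, 0-based).
   Points of C^n are complex lists of length n. *)

definition mdeg :: "nat list \<Rightarrow> nat" where
  "mdeg \<alpha> = sum_list \<alpha>"

definition midx :: "nat \<Rightarrow> nat \<Rightarrow> nat list set" where
  "midx n s = {\<alpha>. length \<alpha> = n \<and> mdeg \<alpha> \<le> s}"

definition madd :: "nat list \<Rightarrow> nat list \<Rightarrow> nat list" where
  "madd \<alpha> \<beta> = map2 (+) \<alpha> \<beta>"

definition mzero :: "nat \<Rightarrow> nat list" where
  "mzero n = replicate n 0"

definition munit :: "nat \<Rightarrow> nat \<Rightarrow> nat list" where
  "munit n i = map (\<lambda>k. if k = i then 1 else 0) [0..<n]"

definition zmon :: "complex list \<Rightarrow> nat list \<Rightarrow> complex" where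
  "zmon z \<alpha> = (\<Prod>k<length \<alpha>. (z ! k) ^ (\<alpha> ! k))"

(* A polynomial in z, zbar is given by its coefficient function (alpha,beta) |-> g_{alpha,beta}. *)
type_synonym cpoly = "nat list \<Rightarrow> nat list \<Rightarrow> complex"

definition psupp :: "cpoly \<Rightarrow> (nat list \<times> nat list) set" where
  "psupp g = {(\<alpha>, \<beta>). g \<alpha> \<beta> \<noteq> 0}"

definition real_cpoly :: "nat \<Rightarrow> cpoly \<Rightarrow> bool" where
  "real_cpoly n g \<longleftrightarrow> finite (psupp g)
     \<and> (\<forall>(\<alpha>, \<beta>) \<in> psupp g. length \<alpha> = n \<and> length \<beta> = n)
     \<and> (\<forall>\<alpha> \<beta>. cnj (g \<alpha> \<beta>) = g \<beta> \<alpha>)"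

definition peval :: "cpoly \<Rightarrow> complex list \<Rightarrow> complex" where
  "peval g z = (\<Sum>(\<alpha>, \<beta>) \<in> psupp g. g \<alpha> \<beta> * zmon z \<alpha> * cnj (zmon z \<beta>))"

definition pdeg :: "cpoly \<Rightarrow> nat" where
  "pdeg g = Max ({0} \<union> {max (mdeg \<alpha>) (mdeg \<beta>) | \<alpha> \<beta>. g \<alpha> \<beta> \<noteq> 0})"

definition dK :: "nat \<Rightarrow> (nat \<Rightarrow> cpoly) \<Rightarrow> nat" where
  "dK m g = Max ({2} \<union> {pdeg (g i) | i. i < m})"

definition Kset :: "nat \<Rightarrow> nat \<Rightarrow> (nat \<Rightarrow> cpoly) \<Rightarrow> complex list set" where
  "Kset n m g = {z. length z = n \<and> (\<forall>i<m. peval (g i) z \<in> \<real> \<and> 0 \<le> Re (peval (g i) z))}"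

definition ball_poly :: "nat \<Rightarrow> real \<Rightarrow> cpoly" where
  "ball_poly n R \<alpha> \<beta> =
     (if \<alpha> = mzero n \<and> \<beta> = mzero n then complex_of_real (R\<^sup>2)
      else if (\<exists>k<n. \<alpha> = munit n k \<and> \<beta> = munit n k) then -1 else 0)"

definition mono_poly :: "nat list \<Rightarrow> nat list \<Rightarrow> cpoly" where
  "mono_poly \<gamma> \<delta> = (\<lambda>\<alpha> \<beta>. if \<alpha> = \<gamma> \<and> \<beta> = \<delta> then 1 else 0)"

type_synonym 'i cmat = "'i \<Rightarrow> 'i \<Rightarrow> complex"

definition mom_mat :: "cpoly \<Rightarrow> nat list cmat" where
  "mom_mat y = (\<lambda>\<alpha> \<beta>. y \<alpha> \<beta>)"

definition loc_mat :: "cpoly \<Rightarrow> cpoly \<Rightarrow> nat list cmat" where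
  "loc_mat g y = (\<lambda>\<alpha> \<beta>. \<Sum>(\<gamma>, \<delta>) \<in> psupp g. g \<gamma> \<delta> * y (madd \<alpha> \<gamma>) (madd \<beta> \<delta>))"

definition psd :: "'i set \<Rightarrow> 'i cmat \<Rightarrow> bool" where
  "psd I M \<longleftrightarrow> (\<forall>a\<in>I. \<forall>b\<in>I. M b a = cnj (M a b))
     \<and> (\<forall>v. 0 \<le> Re (\<Sum>a\<in>I. \<Sum>b\<in>I. cnj (v a) * M a b * v b))"

definition cols_indep :: "'i set \<Rightarrow> 'i set \<Rightarrow> 'i cmat \<Rightarrow> bool" where
  "cols_indep I J M \<longleftrightarrow>
     (\<forall>c. (\<forall>a\<in>I. (\<Sum>b\<in>J. M a b * c b) = 0) \<longrightarrow> (\<forall>b\<in>J. c b = 0))"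

definition mrank :: "'i set \<Rightarrow> 'i cmat \<Rightarrow> nat" where
  "mrank I M = Max {card J | J. J \<subseteq> I \<and> cols_indep I J M}"

definition atomic_repr :: "nat \<Rightarrow> nat \<Rightarrow> complex list set \<Rightarrow> nat \<Rightarrow> cpoly \<Rightarrow> bool" where
  "atomic_repr n d K r y \<longleftrightarrow>
     (\<exists>(pts :: complex list list) (w :: nat \<Rightarrow> real).
        length pts = r \<and> distinct pts \<and> (\<forall>j<r. pts ! j \<in> K \<and> 0 < w j)
        \<and> (\<forall>\<alpha>\<in>midx n d. \<forall>\<beta>\<in>midx n d.
             y \<alpha> \<beta> = (\<Sum>j<r. complex_of_real (w j) * zmon (pts ! j) \<alpha> * cnj (zmon (pts ! j) \<beta>))))"

(* The 3x3 block matrix of condition 3 for coordinates i, j; block (p,q) is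
   M_d(z_{w q} zbar_{w p} y) with w 0 = (none), w 1 = i, w 2 = j. *)
definition bexp :: "nat \<Rightarrow> nat \<Rightarrow> nat \<Rightarrow> nat \<Rightarrow> nat list" where
  "bexp n i j p = (if p = 1 then munit n i else if p = 2 then munit n j else mzero n)"

definition block_mat :: "nat \<Rightarrow> nat \<Rightarrow> nat \<Rightarrow> cpoly \<Rightarrow> (nat \<times> nat list) cmat" where
  "block_mat n i j y = (\<lambda>(p, \<alpha>) (q, \<beta>).
      loc_mat (mono_poly (bexp n i j q) (bexp n i j p)) y \<alpha> \<beta>)"

end

(*
  Necessity: the moments of the atomic measure itself, in all degrees, extend y; all the
  matrices of the conditions are then Gram matrices weighted by the point masses and the
  values of the constraints at the atoms, and the rank is squeezed between rank M_d(y) and the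
  number of atoms.

  Sufficiency: a basis B of the column space of M_d(y) spans all columns of the flat extension,
  and the extended moment matrix is a positive definite inner product on coordinate vectors
  over B. Positivity of the localizing matrix of the ball constraint shows that multiplication by
  z_i acts on these coordinates as a linear shift operator, so the shifts commute; the 3x3 block
  conditions make every eigenvector of a shift an eigenvector of its adjoint. Hence there is an
  orthonormal basis of rank M_d(y) joint eigenvectors, and the conjugated joint eigenvalues are
  the atoms, which the localizing matrices place in K.
*)
theory Submission
  imports Defs "HOL-Library.Function_Algebras" "HOL-Computational_Algebra.Fundamental_Theorem_Algebra"
begin

section \<open>Linear algebra on finitely supported complex functions\<close>

definition vscale :: "complex \<Rightarrow> ('i \<Rightarrow> complex) \<Rightarrow> ('i \<Rightarrow> complex)" where
  "vscale c x = (\<lambda>a. c * x a)"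

lemma vscale_apply: "vscale c x a = c * x a"
  by (simp add: vscale_def)

lemma sum_fun_apply: "(sum f A) x = (\<Sum>a\<in>A. f a x)"
  by (induction A rule: infinite_finite_induct) auto

lemmas fun_vec_simps = vscale_apply plus_fun_apply zero_fun_apply minus_apply uminus_apply

interpretation cvs: vector_space "vscale :: complex \<Rightarrow> ('i \<Rightarrow> complex) \<Rightarrow> _"
  by unfold_locales (auto simp: vscale_def fun_eq_iff algebra_simps)

interpretation cvp: vector_space_pair "vscale :: complex \<Rightarrow> ('i \<Rightarrow> complex) \<Rightarrow> _"
    "vscale :: complex \<Rightarrow> ('i \<Rightarrow> complex) \<Rightarrow> _" ..

abbreviation clinear :: "(('i \<Rightarrow> complex) \<Rightarrow> ('i \<Rightarrow> complex)) \<Rightarrow> bool" where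
  "clinear \<equiv> Vector_Spaces.linear vscale vscale"

lemma clinearI:
  assumes "\<And>x y. T (x + y) = T x + T y" and "\<And>c x. T (vscale c x) = vscale c (T x)"
  shows "clinear T"
  unfolding Vector_Spaces.linear_iff using assms cvs.vector_space_axioms by blast

lemma card_le_if_independent_in_span:
  fixes f :: "'j \<Rightarrow> ('i \<Rightarrow> complex)" and g :: "nat \<Rightarrow> ('i \<Rightarrow> complex)"
  assumes fin: "finite J"
    and span: "\<forall>j\<in>J. \<exists>a. f j = (\<Sum>k<r. vscale (a k) (g k))"
    and indep: "\<forall>c. (\<Sum>j\<in>J. vscale (c j) (f j)) = 0 \<longrightarrow> (\<forall>j\<in>J. c j = 0)"
  shows "card J \<le> r"
proof -
  have inj: "inj_on f J"
  proof (rule inj_onI, rule ccontr)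
    fix j j' assume jj: "j \<in> J" "j' \<in> J" "f j = f j'" "j \<noteq> j'"
    define c where "c = (\<lambda>x. if x = j then (1::complex) else if x = j' then -1 else 0)"
    have "(\<Sum>x\<in>J. vscale (c x) (f x)) = vscale (c j) (f j) + vscale (c j') (f j')
        + (\<Sum>x\<in>J-{j,j'}. vscale (c x) (f x))"
      using jj fin by (simp add: sum.remove[of J j] sum.remove[of "J-{j}" j'] insert_Diff_if
          Diff_insert2[symmetric] algebra_simps)
    also have "\<dots> = 0"
      using jj by (auto simp: c_def fun_eq_iff fun_vec_simps intro!: sum.neutral)
    finally have "c j = 0" using indep jj by blast
    then show False by (simp add: c_def)
  qed
  have "cvs.independent (f ` J)"
    unfolding cvs.dependent_finite[OF finite_imageI[OF fin]]
  proof clarify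
    fix c v assume "v \<in> J" "c (f v) \<noteq> 0" "(\<Sum>v\<in>f ` J. vscale (c v) v) = 0"
    moreover from this have "(\<Sum>j\<in>J. vscale (c (f j)) (f j)) = 0"
      by (simp add: sum.reindex[OF inj])
    ultimately show False using indep by auto
  qed
  moreover have "f ` J \<subseteq> cvs.span (g ` {..<r})"
  proof
    fix v assume "v \<in> f ` J"
    then obtain a where a: "v = (\<Sum>k<r. vscale (a k) (g k))" using span by blast
    show "v \<in> cvs.span (g ` {..<r})"
      unfolding a by (intro cvs.span_sum cvs.span_scale cvs.span_base) auto
  qed
  ultimately have "card (f ` J) \<le> card (g ` {..<r})"
    using cvs.independent_span_bound[of "g ` {..<r}" "f ` J"] by auto
  also have "\<dots> \<le> r" using card_image_le[of "{..<r}" g] by simp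
  finally show ?thesis using card_image[OF inj] by simp
qed

definition supported :: "'i set \<Rightarrow> ('i \<Rightarrow> complex) set" where
  "supported B = {x. \<forall>a. a \<notin> B \<longrightarrow> x a = 0}"

definition unit_vec :: "'i \<Rightarrow> ('i \<Rightarrow> complex)" where
  "unit_vec b = (\<lambda>a. if a = b then 1 else 0)"

lemma subspace_supported: "cvs.subspace (supported B)"
  unfolding cvs.subspace_def supported_def by (auto simp: fun_vec_simps)

lemma unit_vec_supported: "b \<in> B \<Longrightarrow> unit_vec b \<in> supported B"
  unfolding supported_def unit_vec_def by auto

lemma sum_unit_vec: "finite S \<Longrightarrow> b \<in> S \<Longrightarrow> (\<Sum>b'\<in>S. f b' * unit_vec b b') = f b"
  by (simp add: unit_vec_def if_distrib[of "(*) _"] cong: if_cong)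

lemma supported_expansion:
  "finite B \<Longrightarrow> x \<in> supported B \<Longrightarrow> (\<Sum>b\<in>B. vscale (x b) (unit_vec b)) = x"
  unfolding supported_def unit_vec_def
  by (auto simp: fun_vec_simps fun_eq_iff sum_fun_apply if_distrib cong: if_cong)

lemma supported_spanned:
  assumes "finite B"
  obtains g where "\<forall>x\<in>supported B. \<exists>a. x = (\<Sum>k<card B. vscale (a k) (g k))"
proof -
  obtain e where e: "bij_betw e {..<card B} B"
    using ex_bij_betw_nat_finite[OF assms] by (auto simp: atLeast0LessThan)
  have "\<forall>x\<in>supported B. \<exists>a. x = (\<Sum>k<card B. vscale (a k) (unit_vec (e k)))"
  proof
    fix x assume "x \<in> supported B"
    then show "\<exists>a. x = (\<Sum>k<card B. vscale (a k) (unit_vec (e k)))"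
      using supported_expansion[OF assms] sum.reindex_bij_betw[OF e, of "\<lambda>b. vscale (x b) (unit_vec b)"]
      by metis
  qed
  then show ?thesis by (rule that)
qed

section \<open>Hermitian forms and positive semidefinite matrices\<close>

definition sesq :: "'i set \<Rightarrow> 'i cmat \<Rightarrow> ('i \<Rightarrow> complex) \<Rightarrow> ('i \<Rightarrow> complex) \<Rightarrow> complex" where
  "sesq I M u v = (\<Sum>a\<in>I. \<Sum>b\<in>I. cnj (u a) * M a b * v b)"

lemma sesq_add_left: "sesq I M (x + y) z = sesq I M x z + sesq I M y z"
  unfolding sesq_def by (simp add: algebra_simps sum.distrib)

lemma sesq_add_right: "sesq I M z (x + y) = sesq I M z x + sesq I M z y"
  unfolding sesq_def by (simp add: algebra_simps sum.distrib)

lemma sesq_diff_left: "sesq I M (x - y) z = sesq I M x z - sesq I M y z"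
  unfolding sesq_def by (simp add: algebra_simps sum_subtractf)

lemma sesq_diff_right: "sesq I M z (x - y) = sesq I M z x - sesq I M z y"
  unfolding sesq_def by (simp add: algebra_simps sum_subtractf)

lemma sesq_scale_left: "sesq I M (vscale c x) z = cnj c * sesq I M x z"
  unfolding sesq_def by (simp add: vscale_apply algebra_simps sum_distrib_left)

lemma sesq_scale_right: "sesq I M z (vscale c x) = c * sesq I M z x"
  unfolding sesq_def by (simp add: vscale_apply algebra_simps sum_distrib_left)

lemma sesq_zero_left [simp]: "sesq I M 0 z = 0"
  by (simp add: sesq_def)

lemma sesq_zero_right [simp]: "sesq I M z 0 = 0"
  by (simp add: sesq_def)

lemma sesq_sum_left: "sesq I M (sum f S) z = (\<Sum>s\<in>S. sesq I M (f s) z)"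
proof (induction S rule: infinite_finite_induct)
  case (insert x F)
  then show ?case by (simp only: sum.insert[OF insert.hyps] sesq_add_left insert.IH)
qed (simp_all add: sesq_def)

lemma sesq_sum_right: "sesq I M z (sum f S) = (\<Sum>s\<in>S. sesq I M z (f s))"
proof (induction S rule: infinite_finite_induct)
  case (insert x F)
  then show ?case by (simp only: sum.insert[OF insert.hyps] sesq_add_right insert.IH)
qed (simp_all add: sesq_def)

lemmas sesq_linear_simps = sesq_add_left sesq_add_right sesq_diff_left sesq_diff_right
  sesq_scale_left sesq_scale_right sesq_sum_left sesq_sum_right

lemma sesq_cong: "(\<forall>a\<in>I. x a = x' a) \<Longrightarrow> (\<forall>a\<in>I. z a = z' a) \<Longrightarrow> sesq I M x z = sesq I M x' z'"
  unfolding sesq_def by simp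

lemma sesq_restrict:
  assumes "finite I" "B \<subseteq> I" "v \<in> supported B" "w \<in> supported B"
  shows "sesq I M v w = sesq B M v w"
proof -
  have "sesq I M v w = (\<Sum>a\<in>I. \<Sum>b\<in>B. cnj (v a) * M a b * w b)"
    unfolding sesq_def using assms
    by (intro sum.cong refl sum.mono_neutral_right) (auto simp: supported_def)
  also have "\<dots> = sesq B M v w"
    unfolding sesq_def using assms by (intro sum.mono_neutral_right) (auto simp: supported_def)
  finally show ?thesis .
qed

lemma sesq_cnj:
  assumes "\<forall>a\<in>I. \<forall>b\<in>I. M b a = cnj (M a b)"
  shows "cnj (sesq I M u v) = sesq I M v u"
proof -
  have "cnj (sesq I M u v) = (\<Sum>a\<in>I. \<Sum>b\<in>I. cnj (v b) * M b a * u a)"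
    unfolding sesq_def cnj_sum
  proof (intro sum.cong refl)
    fix a b assume "a \<in> I" "b \<in> I"
    then have "M b a = cnj (M a b)" using assms by blast
    then show "cnj (cnj (u a) * M a b * v b) = cnj (v b) * M b a * u a" by simp
  qed
  also have "\<dots> = sesq I M v u" unfolding sesq_def by (rule sum.swap)
  finally show ?thesis .
qed

lemma sesq_diag_real:
  assumes "\<forall>a\<in>I. \<forall>b\<in>I. M b a = cnj (M a b)"
  shows "sesq I M v v = complex_of_real (Re (sesq I M v v))"
proof -
  have "Im (sesq I M v v) = 0"
    using sesq_cnj[OF assms, of v v] by (metis cnj.simps(2) neg_equal_zero)
  then show ?thesis by (simp add: complex_eq_iff)
qed

lemma psd_hermitian: "psd I M \<Longrightarrow> a \<in> I \<Longrightarrow> b \<in> I \<Longrightarrow> M b a = cnj (M a b)"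
  unfolding psd_def by blast

lemma psd_sesq_nonneg: "psd I M \<Longrightarrow> 0 \<le> Re (sesq I M v v)"
  unfolding psd_def sesq_def by blast

lemma psd_subset:
  assumes "psd I M" "J \<subseteq> I" "finite I"
  shows "psd J M"
  unfolding psd_def
proof (intro conjI ballI allI)
  fix a b assume "a \<in> J" "b \<in> J"
  then show "M b a = cnj (M a b)" using assms(2) psd_hermitian[OF assms(1)] by blast
next
  fix v
  define v' where "v' = (\<lambda>a. if a \<in> J then v a else (0::complex))"
  have v'J: "v' \<in> supported J" unfolding supported_def v'_def by simp
  have "sesq I M v' v' = sesq J M v v"
    using sesq_restrict[OF assms(3,2) v'J v'J] by (simp add: sesq_cong v'_def)
  then show "0 \<le> Re (\<Sum>a\<in>J. \<Sum>b\<in>J. cnj (v a) * M a b * v b)"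
    using psd_sesq_nonneg[OF assms(1), of v'] unfolding sesq_def by simp
qed

lemma norm_square_cnj: "z * cnj z = (complex_of_real (cmod z))\<^sup>2" "cnj z * z = (complex_of_real (cmod z))\<^sup>2"
  using complex_norm_square[of z] by (simp, simp add: mult.commute)

lemma nonneg_quadratic_imp_linear_zero:
  fixes D :: complex and a :: real
  assumes a: "a \<ge> 0" and nonneg: "\<forall>k. 0 \<le> (cmod k)\<^sup>2 * a + 2 * Re (cnj k * D)"
  shows "D = 0"
proof (rule ccontr)
  assume D: "D \<noteq> 0"
  define k where "k = - D / complex_of_real (a + 1)"
  have a1: "a + 1 > 0" using a by simp
  have "Re (cnj k * D) = - (cmod D)\<^sup>2 / (a + 1)"
    unfolding k_def using a1 by (simp add: norm_square_cnj field_simps)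
  moreover have "(cmod k)\<^sup>2 = (cmod D)\<^sup>2 / (a + 1)\<^sup>2"
    unfolding k_def using a1 by (simp add: norm_divide power_divide)
  moreover have "\<And>P q::real. q > 0 \<Longrightarrow> P / q\<^sup>2 * a + 2 * (- P / q) = P / q * (a / q - 2)"
    by (simp add: field_simps power2_eq_square)
  ultimately have "(cmod k)\<^sup>2 * a + 2 * Re (cnj k * D) = (cmod D)\<^sup>2 / (a + 1) * (a / (a + 1) - 2)"
    using a1 by metis
  moreover have "a / (a + 1) < 1" and "(cmod D)\<^sup>2 / (a + 1) > 0" using D a1 by simp_all
  ultimately have "(cmod k)\<^sup>2 * a + 2 * Re (cnj k * D) < 0" by (smt (verit) mult_pos_neg)
  then show False using nonneg by (meson not_le)
qed

text \<open>Test positivity at \<open>v - k M v\<close>: the term linear in \<open>k\<close> is \<open>-2 Re k \<parallel>M v\<parallel>\<^sup>2\<close>.\<close>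

lemma psd_sesq_zero_imp_kernel:
  assumes psd: "psd I M" and fin: "finite I" and zero: "sesq I M v v = 0"
  shows "\<forall>a\<in>I. (\<Sum>b\<in>I. M a b * v b) = 0"
proof -
  have herm: "\<forall>a\<in>I. \<forall>b\<in>I. M b a = cnj (M a b)" using psd unfolding psd_def by blast
  define w where "w = (\<lambda>a. \<Sum>b\<in>I. M a b * v b)"
  define W where "W = (\<Sum>a\<in>I. (cmod (w a))\<^sup>2)"
  have wv: "sesq I M w v = complex_of_real W"
  proof -
    have "sesq I M w v = (\<Sum>a\<in>I. cnj (w a) * w a)"
      unfolding sesq_def w_def by (simp add: sum_distrib_left mult.assoc)
    then show ?thesis unfolding W_def by (simp add: norm_square_cnj)
  qed
  have vw: "sesq I M v w = complex_of_real W"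
    using sesq_cnj[OF herm, of w v] wv by simp
  have "- W = 0"
  proof (rule nonneg_quadratic_imp_linear_zero[of "Re (sesq I M w w)", THEN of_real_eq_0_iff[THEN iffD1]])
    show "0 \<le> Re (sesq I M w w)" by (rule psd_sesq_nonneg[OF psd])
    show "\<forall>k. 0 \<le> (cmod k)\<^sup>2 * Re (sesq I M w w) + 2 * Re (cnj k * complex_of_real (- W))"
    proof
      fix k
      have "sesq I M (v - vscale k w) (v - vscale k w)
          = - complex_of_real W * (k + cnj k) + cnj k * k * sesq I M w w"
        by (simp add: sesq_linear_simps zero wv vw algebra_simps)
      also have "\<dots> = complex_of_real ((cmod k)\<^sup>2 * Re (sesq I M w w) - 2 * W * Re k)"
        by (subst sesq_diag_real[OF herm]) (simp add: complex_add_cnj norm_square_cnj)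
      finally have "Re (sesq I M (v - vscale k w) (v - vscale k w))
          = (cmod k)\<^sup>2 * Re (sesq I M w w) + 2 * Re (cnj k * complex_of_real (- W))"
        by simp
      then show "0 \<le> (cmod k)\<^sup>2 * Re (sesq I M w w) + 2 * Re (cnj k * complex_of_real (- W))"
        using psd_sesq_nonneg[OF psd] by metis
    qed
  qed
  then have "W = 0" by simp
  then have "\<forall>a\<in>I. (cmod (w a))\<^sup>2 = 0"
    using fin unfolding W_def by (subst (asm) sum_nonneg_eq_0_iff) auto
  then show ?thesis unfolding w_def by simp
qed

section \<open>Column rank\<close>

lemma finite_mrank_candidates:
  assumes "finite I"
  shows "finite {card J | J. J \<subseteq> I \<and> cols_indep I J M}"
proof -
  have "{card J | J. J \<subseteq> I \<and> cols_indep I J M} \<subseteq> {0..card I}"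
  proof
    fix x assume "x \<in> {card J | J. J \<subseteq> I \<and> cols_indep I J M}"
    then obtain J where "x = card J" "J \<subseteq> I" by blast
    then show "x \<in> {0..card I}" using card_mono[OF assms] by simp
  qed
  then show ?thesis using finite_subset by blast
qed

lemma card_le_mrank:
  assumes "finite I" "J \<subseteq> I" "cols_indep I J M"
  shows "card J \<le> mrank I M"
  unfolding mrank_def using assms by (intro Max_ge[OF finite_mrank_candidates]) blast+

lemma mrank_witness:
  assumes "finite I"
  obtains J where "J \<subseteq> I" "cols_indep I J M" "card J = mrank I M"
proof -
  have "mrank I M \<in> {card J | J. J \<subseteq> I \<and> cols_indep I J M}"
  proof -
    have "cols_indep I {} M" by (simp add: cols_indep_def)
    then show ?thesis
      unfolding mrank_def using finite_mrank_candidates[OF assms] by (intro Max_in) auto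
  qed
  then obtain J where "J \<subseteq> I" "cols_indep I J M" "card J = mrank I M" by auto
  then show ?thesis by (rule that)
qed

lemma cols_indep_mono_rows:
  assumes "cols_indep I J M" "I \<subseteq> I'" "\<forall>a\<in>I. \<forall>b\<in>J. M' a b = M a b"
  shows "cols_indep I' J M'"
  unfolding cols_indep_def
proof (intro allI impI)
  fix c assume zero: "\<forall>a\<in>I'. (\<Sum>b\<in>J. M' a b * c b) = 0"
  have "\<forall>a\<in>I. (\<Sum>b\<in>J. M a b * c b) = 0"
  proof
    fix a assume a: "a \<in> I"
    have "(\<Sum>b\<in>J. M a b * c b) = (\<Sum>b\<in>J. M' a b * c b)"
      using a assms(3) by (intro sum.cong) auto
    then show "(\<Sum>b\<in>J. M a b * c b) = 0" using zero a assms(2) by auto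
  qed
  then show "\<forall>b\<in>J. c b = 0" using assms(1) unfolding cols_indep_def by blast
qed

lemma mrank_le_if_factorization:
  fixes M :: "'i cmat"
  assumes fin: "finite I" and factor: "\<forall>a\<in>I. \<forall>b\<in>I. M a b = (\<Sum>k<r. f k a * h k b)"
  shows "mrank I M \<le> r"
proof -
  obtain J where J: "J \<subseteq> I" "cols_indep I J M" "card J = mrank I M"
    using mrank_witness[OF fin] by blast
  define col where "col = (\<lambda>b a. if a \<in> I then M a b else 0)"
  define g where "g = (\<lambda>k a. if a \<in> I then f k a else 0)"
  have "card J \<le> r"
  proof (rule card_le_if_independent_in_span[where f=col and g=g])
    show "finite J" using J fin finite_subset by blast
    show "\<forall>j\<in>J. \<exists>a. col j = (\<Sum>k<r. vscale (a k) (g k))"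
    proof
      fix j assume "j \<in> J"
      then show "\<exists>a. col j = (\<Sum>k<r. vscale (a k) (g k))"
        using J(1) by (intro exI[of _ "\<lambda>k. h k j"])
          (auto simp: fun_eq_iff sum_fun_apply vscale_apply col_def g_def factor mult.commute)
    qed
    show "\<forall>c. (\<Sum>j\<in>J. vscale (c j) (col j)) = 0 \<longrightarrow> (\<forall>j\<in>J. c j = 0)"
    proof (intro allI impI)
      fix c assume zero: "(\<Sum>j\<in>J. vscale (c j) (col j)) = 0"
      have "\<forall>a\<in>I. (\<Sum>b\<in>J. M a b * c b) = 0"
      proof
        fix a assume a: "a \<in> I"
        have "(\<Sum>j\<in>J. vscale (c j) (col j)) a = 0" using zero by simp
        then show "(\<Sum>b\<in>J. M a b * c b) = 0"
          using a by (simp add: sum_fun_apply vscale_apply col_def mult.commute)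
      qed
      then show "\<forall>j\<in>J. c j = 0" using J(2) unfolding cols_indep_def by blast
    qed
  qed
  then show ?thesis using J by simp
qed

lemma cols_indep_insert:
  assumes indep: "cols_indep I B M" and fin: "finite B"
    and notin_span: "\<not> (\<exists>c. \<forall>x\<in>I. M x a = (\<Sum>b\<in>B. M x b * c b))"
  shows "a \<notin> B" and "cols_indep I (insert a B) M"
proof -
  show aB: "a \<notin> B"
  proof
    assume "a \<in> B"
    then have "\<forall>x\<in>I. M x a = (\<Sum>b\<in>B. M x b * unit_vec a b)"
      using sum_unit_vec[OF fin] by simp
    then show False using notin_span by blast
  qed
  show "cols_indep I (insert a B) M"
    unfolding cols_indep_def
  proof (intro allI impI)
    fix c assume "\<forall>x\<in>I. (\<Sum>b\<in>insert a B. M x b * c b) = 0"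
    then have comb: "\<forall>x\<in>I. M x a * c a + (\<Sum>b\<in>B. M x b * c b) = 0"
      using aB fin by simp
    have ca: "c a = 0"
    proof (rule ccontr)
      assume ca: "c a \<noteq> 0"
      have "\<exists>c'. \<forall>x\<in>I. M x a = (\<Sum>b\<in>B. M x b * c' b)"
      proof (intro exI[of _ "\<lambda>b. - c b / c a"] ballI)
        fix x assume "x \<in> I"
        then have "M x a * c a = - (\<Sum>b\<in>B. M x b * c b)"
          using comb by (simp add: eq_neg_iff_add_eq_0)
        then have "M x a = - (\<Sum>b\<in>B. M x b * c b) / c a"
          using ca by (simp add: field_simps)
        also have "\<dots> = (\<Sum>b\<in>B. M x b * (- c b / c a))"
          by (simp add: sum_divide_distrib sum_negf[symmetric])
        finally show "M x a = (\<Sum>b\<in>B. M x b * (- c b / c a))" .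
      qed
      then show False using notin_span by blast
    qed
    then have "\<forall>x\<in>I. (\<Sum>b\<in>B. M x b * c b) = 0" using comb by simp
    then show "\<forall>b\<in>insert a B. c b = 0" using indep ca unfolding cols_indep_def by blast
  qed
qed

lemma columns_in_span_if_mrank_eq_card:
  assumes "finite I" "B \<subseteq> I" "cols_indep I B M" "mrank I M = card B" "a \<in> I"
  shows "\<exists>c. \<forall>x\<in>I. M x a = (\<Sum>b\<in>B. M x b * c b)"
proof (rule ccontr)
  assume "\<not> ?thesis"
  note insert = cols_indep_insert[OF assms(3) finite_subset[OF assms(2,1)] this]
  have "card (insert a B) \<le> mrank I M"
    using assms insert(2) by (intro card_le_mrank) auto
  then show False
    using insert(1) finite_subset[OF assms(2,1)] assms(4) by simp
qed

section \<open>Joint eigenvectors of commuting operators\<close>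

text \<open>Pointwise evaluation of sums of vectors is no longer a simplification rule from here on;
  otherwise the simplifier expands vector identities into pointwise ones.\<close>

declare plus_fun_apply [simp del] zero_fun_apply [simp del]

text \<open>\<open>op_poly T p x\<close> is \<open>p(T) x\<close>, evaluated by Horner's scheme.\<close>

definition op_poly :: "(('i \<Rightarrow> complex) \<Rightarrow> ('i \<Rightarrow> complex)) \<Rightarrow> complex poly
    \<Rightarrow> ('i \<Rightarrow> complex) \<Rightarrow> ('i \<Rightarrow> complex)" where
  "op_poly T p x = fold_coeffs (\<lambda>a y. vscale a x + T y) p 0"

context
  fixes T :: "('i \<Rightarrow> complex) \<Rightarrow> ('i \<Rightarrow> complex)"
  assumes lin: "clinear T"
begin

lemma op_poly_0 [simp]: "op_poly T 0 x = 0"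
  by (simp add: op_poly_def)

lemma op_poly_pCons: "op_poly T (pCons a p) x = vscale a x + T (op_poly T p x)"
  by (cases "p = 0 \<and> a = 0") (auto simp: op_poly_def cvp.linear_0[OF lin])

lemma op_poly_add: "op_poly T (p + q) x = op_poly T p x + op_poly T q x"
  by (induction p q rule: poly_induct2)
    (simp_all add: op_poly_pCons cvp.linear_add[OF lin] cvs.scale_left_distrib algebra_simps)

lemma op_poly_smult: "op_poly T (smult c p) x = vscale c (op_poly T p x)"
  by (induction p) (simp_all add: op_poly_pCons cvp.linear_scale[OF lin] cvs.scale_right_distrib)

lemma op_poly_linear_factor:
  "op_poly T ([:-\<mu>, 1:] * q) x = T (op_poly T q x) - vscale \<mu> (op_poly T q x)"
proof -
  have "[:-\<mu>, 1:] * q = smult (-\<mu>) q + pCons 0 q" by simp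
  then show ?thesis
    by (simp only: op_poly_add op_poly_smult op_poly_pCons) (simp add: fun_eq_iff fun_vec_simps)
qed

lemma op_poly_monom: "op_poly T (monom c k) x = vscale c ((T ^^ k) x)"
proof (induction k)
  case 0
  then show ?case using op_poly_pCons[of c 0 x] by (simp add: monom_0 cvp.linear_0[OF lin])
next
  case (Suc k)
  then show ?case by (simp add: monom_Suc op_poly_pCons cvp.linear_scale[OF lin])
qed

lemma op_poly_sum: "op_poly T (sum f S) x = (\<Sum>s\<in>S. op_poly T (f s) x)"
  by (induction S rule: infinite_finite_induct) (simp_all add: op_poly_add)

lemma op_poly_in_subspace:
  assumes "cvs.subspace W" "\<forall>x\<in>W. T x \<in> W" "x \<in> W"
  shows "op_poly T p x \<in> W"
  using assms by (induction p)
    (simp_all add: op_poly_pCons cvs.subspace_add cvs.subspace_scale cvs.subspace_0)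

text \<open>Split off linear factors of an annihilating polynomial until a factor kills a nonzero vector.\<close>

lemma eigenvector_if_poly_annihilates:
  assumes W: "cvs.subspace W" and inv: "\<forall>x\<in>W. T x \<in> W"
  shows "q \<noteq> 0 \<Longrightarrow> op_poly T q w = 0 \<Longrightarrow> w \<in> W \<Longrightarrow> w \<noteq> 0 \<Longrightarrow>
    \<exists>x\<in>W. x \<noteq> 0 \<and> (\<exists>\<mu>. T x = vscale \<mu> x)"
proof (induction "degree q" arbitrary: q rule: less_induct)
  case less
  show ?case
  proof (cases "degree q = 0")
    case True
    then obtain c where c: "q = [:c:]" by (metis degree_eq_zeroE)
    then have "vscale c w = 0" "c \<noteq> 0"
      using less op_poly_pCons[of c 0 w] by (auto simp: cvp.linear_0[OF lin])
    then have "w = 0" by simp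
    then show ?thesis using less by simp
  next
    case False
    then obtain \<mu> where "poly q \<mu> = 0"
      using fundamental_theorem_of_algebra[of q] constant_degree[of q] by auto
    define q1 where "q1 = synthetic_div q \<mu>"
    have qq: "q = [:-\<mu>, 1:] * q1"
      using synthetic_div_correct'[of \<mu> q] \<open>poly q \<mu> = 0\<close> by (simp add: q1_def)
    have q1: "q1 \<noteq> 0" using qq less by auto
    have dq: "degree q1 < degree q" using False by (simp add: q1_def degree_synthetic_div)
    define x where "x = op_poly T q1 w"
    have "x \<in> W" unfolding x_def using op_poly_in_subspace[OF W inv] less by blast
    show ?thesis
    proof (cases "x = 0")
      case True
      then show ?thesis using less(1)[OF dq q1] less unfolding x_def by blast
    next
      case False
      have "T x = vscale \<mu> x" using less op_poly_linear_factor[of \<mu> q1 w] qq by (simp add: x_def)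
      then show ?thesis using False \<open>x \<in> W\<close> by blast
    qed
  qed
qed

text \<open>The vectors \<open>w, T w, \<dots>, T\<^sup>r w\<close> in an \<open>r\<close>-dimensional space are dependent, which gives an
  annihilating polynomial.\<close>

lemma eigenvector_exists:
  assumes fin: "finite B" and W: "cvs.subspace W" "W \<subseteq> supported B"
    and inv: "\<forall>x\<in>W. T x \<in> W" and w: "w \<in> W" "w \<noteq> 0"
  shows "\<exists>x\<in>W. x \<noteq> 0 \<and> (\<exists>\<mu>. T x = vscale \<mu> x)"
proof -
  define r where "r = card B"
  obtain g where g: "\<forall>x\<in>supported B. \<exists>a. x = (\<Sum>k<r. vscale (a k) (g k))"
    using supported_spanned[OF fin] unfolding r_def by blast
  have powers_in_W: "(T ^^ k) w \<in> W" for k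
    by (induction k) (use w inv in auto)
  have "\<not> (\<forall>c. (\<Sum>k\<in>{..r}. vscale (c k) ((T ^^ k) w)) = 0 \<longrightarrow> (\<forall>k\<in>{..r}. c k = 0))"
  proof
    assume "\<forall>c. (\<Sum>k\<in>{..r}. vscale (c k) ((T ^^ k) w)) = 0 \<longrightarrow> (\<forall>k\<in>{..r}. c k = 0)"
    moreover have "\<forall>j\<in>{..r}. \<exists>a. (T ^^ j) w = (\<Sum>k<r. vscale (a k) (g k))"
      using g powers_in_W W(2) by blast
    ultimately have "card {..r} \<le> r" by (intro card_le_if_independent_in_span) auto
    then show False by simp
  qed
  then obtain c k where c: "(\<Sum>k\<in>{..r}. vscale (c k) ((T ^^ k) w)) = 0" "k \<le> r" "c k \<noteq> 0"
    by blast
  define q where "q = (\<Sum>k\<in>{..r}. monom (c k) k)"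
  have "coeff q k = c k"
    unfolding q_def coeff_sum using c(2) by (simp add: coeff_monom)
  then have "q \<noteq> 0" using c(3) by auto
  moreover have "op_poly T q w = 0"
    unfolding q_def using c(1) by (simp add: op_poly_sum op_poly_monom)
  ultimately show ?thesis using eigenvector_if_poly_annihilates[OF W(1) inv] w by blast
qed

end

lemma joint_eigenvector_exists:
  fixes T :: "nat \<Rightarrow> ('i \<Rightarrow> complex) \<Rightarrow> ('i \<Rightarrow> complex)"
  assumes fin: "finite B" and lin: "\<forall>i<n. clinear (T i)"
    and commute: "\<forall>i<n. \<forall>j<n. \<forall>x. T i (T j x) = T j (T i x)"
    and W: "cvs.subspace W" "W \<subseteq> supported B" "\<forall>i<n. \<forall>x\<in>W. T i x \<in> W"
    and w: "w \<in> W" "w \<noteq> 0"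
  shows "\<exists>x\<in>W. x \<noteq> 0 \<and> (\<exists>lam. \<forall>i<n. T i x = vscale (lam i) x)"
proof -
  have "k \<le> n \<Longrightarrow> \<exists>W'. cvs.subspace W' \<and> W' \<subseteq> W \<and> (\<exists>x\<in>W'. x \<noteq> 0)
      \<and> (\<forall>i<n. \<forall>x\<in>W'. T i x \<in> W') \<and> (\<exists>lam. \<forall>i<k. \<forall>x\<in>W'. T i x = vscale (lam i) x)" for k
  proof (induction k)
    case 0
    then show ?case using W w by blast
  next
    case (Suc k)
    then obtain W' lam where W': "cvs.subspace W'" "W' \<subseteq> W" "\<exists>x\<in>W'. x \<noteq> 0"
      "\<forall>i<n. \<forall>x\<in>W'. T i x \<in> W'" "\<forall>i<k. \<forall>x\<in>W'. T i x = vscale (lam i) x" by auto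
    have k: "k < n" using Suc by simp
    then obtain x \<mu> where x: "x \<in> W'" "x \<noteq> 0" "T k x = vscale \<mu> x"
      using eigenvector_exists[OF lin[rule_format, OF k] fin W'(1)] W'(2,3,4) W(2) by blast
    define E where "E = {y\<in>W'. T k y = vscale \<mu> y}"
    have "cvs.subspace E"
      using W'(1) lin k unfolding cvs.subspace_def E_def
      by (auto simp: cvp.linear_0 cvp.linear_add cvp.linear_scale cvs.scale_right_distrib)
    moreover have "\<forall>i<n. \<forall>y\<in>E. T i y \<in> E"
    proof (intro allI impI ballI)
      fix i y assume i: "i < n" and y: "y \<in> E"
      have "T k (T i y) = T i (T k y)" using commute i k by blast
      also have "\<dots> = vscale \<mu> (T i y)" using y lin i by (simp add: E_def cvp.linear_scale)
      finally show "T i y \<in> E" using W'(4) i y by (simp add: E_def)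
    qed
    moreover have "\<forall>i<Suc k. \<forall>y\<in>E. T i y = vscale ((lam(k := \<mu>)) i) y"
      using W'(5) by (auto simp: E_def less_Suc_eq)
    ultimately show ?case using W'(2) x unfolding E_def by blast
  qed
  from this[OF order_refl] show ?thesis by blast
qed

text \<open>The nonnegativity hypothesis \<open>block\<close>, applied to \<open>u - cnj \<mu> e\<close> and \<open>e\<close>, bounds the
  defect \<open>\<langle>T u, e\<rangle> - cnj \<mu> \<langle>u, e\<rangle>\<close> by the quadratic form of \<open>u\<close>; scaling \<open>u\<close> forces
  the defect to vanish, so \<open>e\<close> is also an eigenvector of the adjoint of \<open>T\<close>.\<close>

context
  fixes B :: "'i set" and G :: "'i cmat" and T :: "('i \<Rightarrow> complex) \<Rightarrow> ('i \<Rightarrow> complex)"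
    and e :: "'i \<Rightarrow> complex" and \<mu> :: complex
  assumes herm: "\<forall>a\<in>B. \<forall>b\<in>B. G b a = cnj (G a b)"
    and lin: "clinear T"
    and block: "\<forall>x\<in>supported B. \<forall>w\<in>supported B.
        0 \<le> Re (sesq B G x x + sesq B G (T x) w + sesq B G w (T x) + sesq B G (T w) (T w))"
    and e: "e \<in> supported B" "T e = vscale \<mu> e"
begin

lemma adjoint_defect_bound:
  assumes u: "u \<in> supported B"
  shows "0 \<le> Re (sesq B G u u) + 2 * Re (sesq B G (T u) e - cnj \<mu> * sesq B G u e)"
proof -
  let ?F = "sesq B G"
  have F_cnj: "\<And>u v. cnj (?F u v) = ?F v u" using sesq_cnj[OF herm] .
  define u' where "u' = u - vscale (cnj \<mu>) e"
  have u'_supported: "u' \<in> supported B"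
    using u e unfolding u'_def by (intro cvs.subspace_diff subspace_supported cvs.subspace_scale)
  have Tu': "T u' = T u - vscale (complex_of_real ((cmod \<mu>)\<^sup>2)) e"
    unfolding u'_def using e
    by (simp add: cvp.linear_diff[OF lin] cvp.linear_scale[OF lin] norm_square_cnj mult.commute)
  have u'u': "?F u' u' = ?F u u - cnj \<mu> * ?F u e - \<mu> * cnj (?F u e)
      + complex_of_real ((cmod \<mu>)\<^sup>2) * ?F e e"
    unfolding u'_def by (simp add: sesq_linear_simps F_cnj norm_square_cnj algebra_simps)
  have Tu'e: "?F (T u') e = ?F (T u) e - complex_of_real ((cmod \<mu>)\<^sup>2) * ?F e e"
    unfolding Tu' by (simp add: sesq_linear_simps)
  have eTu': "?F e (T u') = cnj (?F (T u) e) - complex_of_real ((cmod \<mu>)\<^sup>2) * ?F e e"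
    unfolding Tu' by (simp add: sesq_linear_simps F_cnj)
  have TeTe: "?F (T e) (T e) = complex_of_real ((cmod \<mu>)\<^sup>2) * ?F e e"
    unfolding e(2) by (simp add: sesq_linear_simps norm_square_cnj mult.assoc[symmetric])
  have "0 \<le> Re (?F u' u' + ?F (T u') e + ?F e (T u') + ?F (T e) (T e))"
    using block u'_supported e(1) by blast
  also have "?F u' u' + ?F (T u') e + ?F e (T u') + ?F (T e) (T e)
      = ?F u u + (?F (T u) e - cnj \<mu> * ?F u e) + cnj (?F (T u) e - cnj \<mu> * ?F u e)"
    unfolding u'u' Tu'e eTu' TeTe by (simp add: algebra_simps)
  finally show ?thesis by simp
qed

lemma eigenvector_of_adjoint:
  assumes nonneg: "\<forall>x. 0 \<le> Re (sesq B G x x)" and x: "x \<in> supported B"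
  shows "sesq B G e (T x) = \<mu> * sesq B G e x"
proof -
  let ?F = "sesq B G"
  define D where "D = (\<lambda>u. ?F (T u) e - cnj \<mu> * ?F u e)"
  have D_scale: "D (vscale k u) = cnj k * D u" for k u
    unfolding D_def by (simp add: cvp.linear_scale[OF lin] sesq_linear_simps algebra_simps)
  have "D x = 0"
  proof (rule nonneg_quadratic_imp_linear_zero[where a="Re (?F x x)"])
    show "0 \<le> Re (?F x x)" using nonneg by blast
    show "\<forall>k. 0 \<le> (cmod k)\<^sup>2 * Re (?F x x) + 2 * Re (cnj k * D x)"
    proof
      fix k
      have "0 \<le> Re (?F (vscale k x) (vscale k x)) + 2 * Re (D (vscale k x))"
        unfolding D_def using x by (intro adjoint_defect_bound cvs.subspace_scale[OF subspace_supported])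
      moreover have "Re (?F (vscale k x) (vscale k x)) = (cmod k)\<^sup>2 * Re (?F x x)"
        by (simp add: sesq_linear_simps mult.assoc[symmetric] norm_square_cnj)
      ultimately show "0 \<le> (cmod k)\<^sup>2 * Re (?F x x) + 2 * Re (cnj k * D x)"
        by (simp only: D_scale)
    qed
  qed
  then have "cnj (?F (T x) e) = cnj (cnj \<mu> * ?F x e)" unfolding D_def by simp
  then show ?thesis by (simp add: sesq_cnj[OF herm])
qed

end

locale commuting_normal_ops =
  fixes B :: "'i set" and G :: "'i cmat" and n :: nat
    and T :: "nat \<Rightarrow> ('i \<Rightarrow> complex) \<Rightarrow> ('i \<Rightarrow> complex)"
  assumes finite_B: "finite B"
    and hermitian: "\<forall>a\<in>B. \<forall>b\<in>B. G b a = cnj (G a b)"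
    and nonneg: "\<forall>x. 0 \<le> Re (sesq B G x x)"
    and definite: "\<forall>x\<in>supported B. sesq B G x x = 0 \<longrightarrow> x = 0"
    and linear: "\<forall>i<n. clinear (T i)"
    and supported: "\<forall>i<n. \<forall>x. T i x \<in> supported B"
    and commute: "\<forall>i<n. \<forall>j<n. \<forall>x. T i (T j x) = T j (T i x)"
    and adjoint_eigen: "\<forall>i<n. \<forall>e\<in>supported B. \<forall>\<mu>. T i e = vscale \<mu> e \<longrightarrow>
                    (\<forall>x\<in>supported B. sesq B G e (T i x) = \<mu> * sesq B G e x)"
begin

abbreviation ip where "ip \<equiv> sesq B G"

lemma ip_cnj: "cnj (ip x y) = ip y x"
  using sesq_cnj[OF hermitian] .

definition orthonormal_eigen :: "(nat \<Rightarrow> ('i \<Rightarrow> complex)) \<Rightarrow> (nat \<Rightarrow> nat \<Rightarrow> complex) \<Rightarrow> nat \<Rightarrow> bool"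
  where
  "orthonormal_eigen e lam L \<longleftrightarrow> (\<forall>j<L. e j \<in> supported B)
     \<and> (\<forall>j<L. \<forall>k<L. ip (e j) (e k) = (if j = k then 1 else 0))
     \<and> (\<forall>j<L. \<forall>i<n. T i (e j) = vscale (lam j i) (e j))"

definition eigenbasis :: "(nat \<Rightarrow> ('i \<Rightarrow> complex)) \<Rightarrow> (nat \<Rightarrow> nat \<Rightarrow> complex) \<Rightarrow> nat \<Rightarrow> bool"
  where
  "eigenbasis e lam L \<longleftrightarrow> orthonormal_eigen e lam L
     \<and> (\<forall>x\<in>supported B. (\<forall>j<L. ip (e j) x = 0) \<longrightarrow> x = 0)"

lemma ip_orthonormal_right:
  assumes "orthonormal_eigen e lam L" "j < L"
  shows "ip (e j) (\<Sum>k<L. vscale (c k) (e k)) = c j"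
proof -
  have "ip (e j) (\<Sum>k<L. vscale (c k) (e k)) = (\<Sum>k<L. if j = k then c k else 0)"
    using assms unfolding orthonormal_eigen_def by (intro trans[OF sesq_sum_right] sum.cong)
      (auto simp: sesq_scale_right)
  then show ?thesis using assms(2) by simp
qed

lemma orthonormal_eigen_length_le:
  assumes "orthonormal_eigen e lam L"
  shows "L \<le> card B"
proof -
  obtain g where g: "\<forall>x\<in>supported B. \<exists>a. x = (\<Sum>k<card B. vscale (a k) (g k))"
    using supported_spanned[OF finite_B] by blast
  have "card {..<L} \<le> card B"
  proof (rule card_le_if_independent_in_span[where f=e and g=g])
    show "\<forall>j\<in>{..<L}. \<exists>a. e j = (\<Sum>k<card B. vscale (a k) (g k))"
      using g assms unfolding orthonormal_eigen_def by auto
    show "\<forall>c. (\<Sum>j\<in>{..<L}. vscale (c j) (e j)) = 0 \<longrightarrow> (\<forall>j\<in>{..<L}. c j = 0)"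
    proof (intro allI impI ballI)
      fix c j assume "(\<Sum>j\<in>{..<L}. vscale (c j) (e j)) = 0" "j \<in> {..<L}"
      then show "c j = 0" using ip_orthonormal_right[OF assms, of j c] by simp
    qed
  qed simp
  then show ?thesis by simp
qed

lemma orthonormal_eigen_extend:
  assumes o: "orthonormal_eigen e lam L"
    and x: "x \<in> supported B" "x \<noteq> 0" "\<forall>j<L. ip (e j) x = 0"
  shows "\<exists>v lam'. orthonormal_eigen (e(L := v)) (lam(L := lam')) (Suc L)"
proof -
  define W where "W = {y\<in>supported B. \<forall>j<L. ip (e j) y = 0}"
  have W: "cvs.subspace W" using subspace_supported unfolding W_def cvs.subspace_def
    by (auto simp: sesq_add_right sesq_scale_right)
  have W_invariant: "\<forall>i<n. \<forall>y\<in>W. T i y \<in> W"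
  proof (intro allI impI ballI)
    fix i y assume i: "i < n" and y: "y \<in> W"
    have "\<forall>j<L. ip (e j) (T i y) = lam j i * ip (e j) y"
      using adjoint_eigen i o y unfolding orthonormal_eigen_def W_def by blast
    then show "T i y \<in> W" using supported i y unfolding W_def by simp
  qed
  obtain z lz where z: "z \<in> W" "z \<noteq> 0" "\<forall>i<n. T i z = vscale (lz i) z"
    using joint_eigenvector_exists[OF finite_B linear commute W _ W_invariant, of x] x
    unfolding W_def by blast
  have z_supported: "z \<in> supported B" using z W_def by blast
  define s where "s = Re (ip z z)"
  have ip_zz: "ip z z = complex_of_real s"
    unfolding s_def by (rule sesq_diag_real[OF hermitian])
  have "s \<noteq> 0" using definite z_supported z ip_zz by force
  then have s: "s > 0" using nonneg[rule_format, of z] unfolding s_def by linarith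
  define v where "v = vscale (complex_of_real (1 / sqrt s)) z"
  have "v \<in> supported B" using z_supported unfolding v_def
    by (rule cvs.subspace_scale[OF subspace_supported])
  moreover have "ip v v = 1"
    using s unfolding v_def by (simp add: sesq_linear_simps ip_zz flip: of_real_mult)
  moreover have "\<forall>j<L. ip (e j) v = 0" "\<forall>j<L. ip v (e j) = 0"
    using z ip_cnj unfolding v_def W_def by (simp_all add: sesq_scale_left sesq_scale_right)
      (metis complex_cnj_zero_iff)
  moreover have "\<forall>i<n. T i v = vscale (lz i) v"
    using z linear unfolding v_def by (simp add: cvp.linear_scale mult.commute)
  ultimately have "orthonormal_eigen (e(L := v)) (lam(L := lz)) (Suc L)"
    using o unfolding orthonormal_eigen_def by (auto simp: less_Suc_eq)
  then show ?thesis by blast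
qed

text \<open>Extending an orthonormal family of joint eigenvectors as long as possible terminates by
  the dimension bound.\<close>

lemma eigenbasis_exists: "\<exists>e lam L. eigenbasis e lam L"
proof -
  have "orthonormal_eigen e lam L \<Longrightarrow> \<exists>e lam L. eigenbasis e lam L" for e lam L
  proof (induction "card B - L" arbitrary: e lam L rule: less_induct)
    case less
    show ?case
    proof (cases "\<forall>x\<in>supported B. (\<forall>j<L. ip (e j) x = 0) \<longrightarrow> x = 0")
      case True
      then show ?thesis using less.prems unfolding eigenbasis_def by blast
    next
      case False
      then obtain x where "x \<in> supported B" "x \<noteq> 0" "\<forall>j<L. ip (e j) x = 0" by blast
      then obtain v lam' where extended: "orthonormal_eigen (e(L := v)) (lam(L := lam')) (Suc L)"
        using orthonormal_eigen_extend[OF less.prems] by blast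
      have "card B - Suc L < card B - L"
        using orthonormal_eigen_length_le[OF extended] by simp
      then show ?thesis using less.hyps extended by blast
    qed
  qed
  moreover have "orthonormal_eigen (\<lambda>_. 0) (\<lambda>_ _. 0) 0"
    unfolding orthonormal_eigen_def by simp
  ultimately show ?thesis by blast
qed

lemma eigenbasis_expansion:
  assumes b: "eigenbasis e lam L" and x: "x \<in> supported B"
  shows "x = (\<Sum>j<L. vscale (ip (e j) x) (e j))"
proof -
  have o: "orthonormal_eigen e lam L" using b unfolding eigenbasis_def by blast
  define y where "y = x - (\<Sum>j<L. vscale (ip (e j) x) (e j))"
  have "(\<Sum>j<L. vscale (ip (e j) x) (e j)) \<in> supported B"
    using o unfolding orthonormal_eigen_def
    by (intro cvs.subspace_sum[OF subspace_supported] cvs.subspace_scale[OF subspace_supported]) auto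
  then have "y \<in> supported B"
    using x unfolding y_def by (rule cvs.subspace_diff[OF subspace_supported, rotated])
  moreover have "\<forall>k<L. ip (e k) y = 0"
    using ip_orthonormal_right[OF o] unfolding y_def by (simp add: sesq_diff_right)
  ultimately have "y = 0" using b unfolding eigenbasis_def by blast
  then show ?thesis unfolding y_def by simp
qed

lemma eigenbasis_length:
  assumes b: "eigenbasis e lam L"
  shows "L = card B"
proof -
  have "card B \<le> L"
  proof (rule card_le_if_independent_in_span[where f=unit_vec and g=e])
    show "\<forall>j\<in>B. \<exists>a. unit_vec j = (\<Sum>k<L. vscale (a k) (e k))"
    proof
      fix j assume "j \<in> B"
      show "\<exists>a. unit_vec j = (\<Sum>k<L. vscale (a k) (e k))"
        by (intro exI[of _ "\<lambda>k. ip (e k) (unit_vec j)"] eigenbasis_expansion[OF b]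
            unit_vec_supported \<open>j \<in> B\<close>)
    qed
    show "\<forall>c. (\<Sum>j\<in>B. vscale (c j) (unit_vec j)) = 0 \<longrightarrow> (\<forall>j\<in>B. c j = 0)"
    proof (intro allI impI ballI)
      fix c b assume "(\<Sum>j\<in>B. vscale (c j) (unit_vec j)) = 0" and b: "b \<in> B"
      then have "(\<Sum>j\<in>B. vscale (c j) (unit_vec j)) b = 0" by (simp add: zero_fun_apply)
      then have "(\<Sum>j\<in>B. c j * unit_vec j b) = 0"
        by (simp only: sum_fun_apply vscale_apply)
      then show "c b = 0" using b finite_B by (simp add: unit_vec_def if_distrib cong: if_cong)
    qed
  qed (rule finite_B)
  moreover have "L \<le> card B"
    using b orthonormal_eigen_length_le unfolding eigenbasis_def by blast
  ultimately show ?thesis by simp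
qed

lemma parseval:
  assumes b: "eigenbasis e lam L" and x: "x \<in> supported B" and z: "z \<in> supported B"
  shows "ip x z = (\<Sum>j<L. cnj (ip (e j) x) * ip (e j) z)"
proof -
  have "ip x z = (\<Sum>j<L. ip (e j) z * ip x (e j))"
    by (subst eigenbasis_expansion[OF b z]) (simp add: sesq_sum_right sesq_scale_right)
  also have "\<dots> = (\<Sum>j<L. cnj (ip (e j) x) * ip (e j) z)"
    by (simp add: ip_cnj mult.commute)
  finally show ?thesis .
qed

end

section \<open>Multi-indices and monomials\<close>

lemma finite_midx: "finite (midx n s)"
proof -
  have "midx n s \<subseteq> {xs. set xs \<subseteq> {0..s} \<and> length xs = n}"
    unfolding midx_def mdeg_def using member_le_sum_list by fastforce
  then show ?thesis using finite_lists_length_eq[of "{0..s}" n] finite_subset by blast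
qed

lemma midx_mono: "s \<le> t \<Longrightarrow> midx n s \<subseteq> midx n t"
  unfolding midx_def by auto

lemma length_madd [simp]: "length (madd a b) = min (length a) (length b)"
  by (simp add: madd_def)

lemma length_mzero [simp]: "length (mzero n) = n"
  by (simp add: mzero_def)

lemma length_munit [simp]: "length (munit n i) = n"
  by (simp add: munit_def)

lemma mdeg_madd: "length a = length b \<Longrightarrow> mdeg (madd a b) = mdeg a + mdeg b"
  unfolding mdeg_def madd_def by (induction a b rule: list_induct2) auto

lemma mdeg_mzero [simp]: "mdeg (mzero n) = 0"
  by (simp add: mzero_def mdeg_def)

lemma nth_munit: "k < n \<Longrightarrow> munit n i ! k = (if k = i then 1 else 0)"
  by (simp add: munit_def)

lemma mdeg_munit: "mdeg (munit n i) = (if i < n then 1 else 0)"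
  unfolding mdeg_def munit_def by (simp add: sum_list_sum_nth atLeast0LessThan)

lemma madd_mzero [simp]: "length a = n \<Longrightarrow> madd a (mzero n) = a"
  by (simp add: madd_def mzero_def list_eq_iff_nth_eq)

lemma madd_assoc: "length a = length b \<Longrightarrow> length b = length c \<Longrightarrow>
    madd (madd a b) c = madd a (madd b c)"
  by (simp add: madd_def list_eq_iff_nth_eq)

lemma madd_commute: "length a = length b \<Longrightarrow> madd a b = madd b a"
  by (simp add: madd_def list_eq_iff_nth_eq)

lemma mzero_ne_munit: "i < n \<Longrightarrow> mzero n \<noteq> munit n i"
  by (metis mdeg_munit mdeg_mzero zero_neq_one)

lemma munit_inj: "i < n \<Longrightarrow> j < n \<Longrightarrow> munit n i = munit n j \<Longrightarrow> i = j"
  by (metis nth_munit zero_neq_one)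

lemma midx_madd: "a \<in> midx n s \<Longrightarrow> length c = n \<Longrightarrow> s + mdeg c \<le> t \<Longrightarrow> madd a c \<in> midx n t"
  unfolding midx_def by (auto simp: mdeg_madd)

lemma mdeg_eq_0_iff: "length a = n \<Longrightarrow> mdeg a = 0 \<longleftrightarrow> a = mzero n"
  unfolding mdeg_def mzero_def
  by (metis list_eq_iff_nth_eq elem_le_sum_list le_zero_eq length_replicate nth_replicate
      sum_list_replicate mult_zero_right)

lemma mdeg_pos_decompose:
  assumes "length a = n" "mdeg a > 0"
  obtains k a' where "k < n" "a = madd a' (munit n k)" "length a' = n" "mdeg a = Suc (mdeg a')"
proof -
  obtain k where k: "k < n" "a ! k > 0"
    using assms mdeg_eq_0_iff[OF assms(1)]
    by (metis gr0I list_eq_iff_nth_eq length_mzero mzero_def nth_replicate)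
  define a' where "a' = a[k := a ! k - 1]"
  have "length a' = n" using assms by (simp add: a'_def)
  moreover have a: "a = madd a' (munit n k)"
    using k assms \<open>length a' = n\<close>
    by (auto simp: list_eq_iff_nth_eq a'_def nth_munit nth_list_update madd_def)
  moreover have "mdeg a = Suc (mdeg a')"
    using \<open>length a' = n\<close> a mdeg_madd[of a' "munit n k"] mdeg_munit[of n k] k by simp
  ultimately show ?thesis using k that by blast
qed

lemma zmon_madd: "length a = length b \<Longrightarrow> zmon z (madd a b) = zmon z a * zmon z b"
  unfolding zmon_def madd_def by (simp add: power_add prod.distrib)

lemma zmon_mzero [simp]: "zmon z (mzero n) = 1"
  by (simp add: zmon_def mzero_def)

lemma zmon_munit: "i < n \<Longrightarrow> zmon z (munit n i) = z ! i"
proof -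
  assume i: "i < n"
  have "zmon z (munit n i) = (\<Prod>k<n. if k = i then z ! k else 1)"
    unfolding zmon_def by (intro prod.cong) (auto simp: nth_munit)
  then show ?thesis using i by simp
qed

lemma zmon_map_cnj: "length z = length a \<Longrightarrow> zmon (map cnj z) a = cnj (zmon z a)"
  unfolding zmon_def by simp

section \<open>Moments of an atomic measure\<close>

lemma mom_mat_eq [simp]: "mom_mat y = y"
  by (simp add: mom_mat_def fun_eq_iff)

lemma loc_mat_mono_poly: "loc_mat (mono_poly \<gamma> \<delta>) y a b = y (madd a \<gamma>) (madd b \<delta>)"
proof -
  have "psupp (mono_poly \<gamma> \<delta>) = {(\<gamma>, \<delta>)}"
    unfolding psupp_def mono_poly_def by auto
  then show ?thesis unfolding loc_mat_def by (simp add: mono_poly_def)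
qed

lemma peval_real:
  assumes "real_cpoly n g"
  shows "peval g z \<in> \<real>"
proof -
  have h: "\<forall>a b. cnj (g a b) = g b a" using assms unfolding real_cpoly_def by auto
  have sym: "g a b \<noteq> 0 \<Longrightarrow> g b a \<noteq> 0" for a b using h by (metis complex_cnj_zero_iff)
  have swap: "(\<lambda>(a, b). (b, a)) ` psupp g = psupp g"
    unfolding psupp_def using sym by (auto simp: image_iff)
  have "cnj (peval g z) = (\<Sum>(a, b)\<in>psupp g. g b a * zmon z b * cnj (zmon z a))"
    unfolding peval_def cnj_sum by (intro sum.cong refl) (auto simp: h mult.commute mult.left_commute)
  also have "\<dots> = (\<Sum>(a, b)\<in>(\<lambda>(a, b). (b, a)) ` psupp g. g a b * zmon z a * cnj (zmon z b))"
    by (subst sum.reindex) (auto simp: inj_on_def case_prod_beta)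
  also have "\<dots> = peval g z" unfolding swap peval_def ..
  finally show ?thesis by (metis Reals_cnj_iff)
qed

lemma psd_gram:
  fixes M :: "'i cmat" and f :: "nat \<Rightarrow> 'i \<Rightarrow> complex"
  assumes gram: "\<forall>a\<in>I. \<forall>b\<in>I. M a b = (\<Sum>j<r. complex_of_real (c j) * cnj (f j a) * f j b)"
    and c: "\<forall>j<r. 0 \<le> c j"
  shows "psd I M"
  unfolding psd_def
proof (intro conjI ballI allI)
  fix a b assume "a \<in> I" "b \<in> I"
  then show "M b a = cnj (M a b)" using gram by (simp add: cnj_sum mult_ac)
next
  fix v
  have "(\<Sum>a\<in>I. \<Sum>b\<in>I. cnj (v a) * M a b * v b)
      = (\<Sum>a\<in>I. \<Sum>b\<in>I. \<Sum>j<r. complex_of_real (c j) * (cnj (f j a * v a) * (f j b * v b)))"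
    using gram by (intro sum.cong refl) (simp add: sum_distrib_left sum_distrib_right algebra_simps)
  also have "\<dots> = (\<Sum>j<r. complex_of_real (c j) * (cnj (\<Sum>a\<in>I. f j a * v a) * (\<Sum>b\<in>I. f j b * v b)))"
    by (simp add: sum.swap[of _ I "{..<r}"] sum_distrib_left sum_distrib_right algebra_simps)
  also have "\<dots> = (\<Sum>j<r. complex_of_real (c j * (cmod (\<Sum>b\<in>I. f j b * v b))\<^sup>2))"
    by (intro sum.cong refl) (simp only: norm_square_cnj(2) of_real_mult of_real_power)
  finally have "Re (\<Sum>a\<in>I. \<Sum>b\<in>I. cnj (v a) * M a b * v b)
      = (\<Sum>j<r. c j * (cmod (\<Sum>b\<in>I. f j b * v b))\<^sup>2)"
    by simp
  also have "\<dots> \<ge> 0" using c by (intro sum_nonneg) simp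
  finally show "0 \<le> Re (\<Sum>a\<in>I. \<Sum>b\<in>I. cnj (v a) * M a b * v b)" .
qed

definition atomic_moments :: "complex list list \<Rightarrow> (nat \<Rightarrow> real) \<Rightarrow> cpoly" where
  "atomic_moments pts w \<alpha> \<beta> =
     (\<Sum>j<length pts. complex_of_real (w j) * zmon (pts ! j) \<alpha> * cnj (zmon (pts ! j) \<beta>))"

lemma atomic_repr_altdef:
  "atomic_repr n d K r y \<longleftrightarrow>
     (\<exists>pts w. length pts = r \<and> distinct pts \<and> (\<forall>j<r. pts ! j \<in> K \<and> 0 < w j)
        \<and> (\<forall>\<alpha>\<in>midx n d. \<forall>\<beta>\<in>midx n d. y \<alpha> \<beta> = atomic_moments pts w \<alpha> \<beta>))"
  unfolding atomic_repr_def atomic_moments_def by (rule iffI; elim exE; intro exI) auto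

context
  fixes pts :: "complex list list" and w :: "nat \<Rightarrow> real"
  assumes weights_nonneg: "\<forall>j<length pts. 0 \<le> w j"
begin

lemma psd_atomic_moments: "psd I (atomic_moments pts w)"
  by (rule psd_gram[where f="\<lambda>j a. cnj (zmon (pts ! j) a)" and c=w])
    (use weights_nonneg in \<open>auto simp: atomic_moments_def\<close>)

lemma loc_mat_atomic_moments:
  assumes g: "real_cpoly n g" and pts: "\<forall>j<length pts. length (pts ! j) = n"
    and ab: "length a = n" "length b = n"
  shows "loc_mat g (atomic_moments pts w) a b =
    (\<Sum>j<length pts. complex_of_real (w j) * peval g (pts ! j) * zmon (pts ! j) a * cnj (zmon (pts ! j) b))"
proof -
  have supp: "\<forall>(\<gamma>, \<delta>)\<in>psupp g. length \<gamma> = n \<and> length \<delta> = n" using g unfolding real_cpoly_def by auto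
  have "loc_mat g (atomic_moments pts w) a b = (\<Sum>j<length pts. complex_of_real (w j) *
      (\<Sum>(\<gamma>, \<delta>)\<in>psupp g. g \<gamma> \<delta> * (zmon (pts ! j) (madd a \<gamma>) * cnj (zmon (pts ! j) (madd b \<delta>)))))"
    unfolding loc_mat_def atomic_moments_def
    by (simp add: sum_distrib_left sum.swap[of _ "psupp g"] case_prod_beta algebra_simps)
  also have "\<dots> = (\<Sum>j<length pts. complex_of_real (w j) * peval g (pts ! j) * zmon (pts ! j) a
      * cnj (zmon (pts ! j) b))"
    unfolding peval_def sum_distrib_right sum_distrib_left
    by (intro sum.cong refl) (use supp ab in \<open>auto simp: zmon_madd algebra_simps\<close>)
  finally show ?thesis .
qed

lemma psd_loc_atomic_moments:
  assumes g: "real_cpoly n g" and pts: "\<forall>j<length pts. length (pts ! j) = n"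
    and nonneg: "\<forall>j<length pts. 0 \<le> Re (peval g (pts ! j))"
  shows "psd (midx n s) (loc_mat g (atomic_moments pts w))"
proof (rule psd_gram[where f="\<lambda>j a. cnj (zmon (pts ! j) a)"
      and c="\<lambda>j. w j * Re (peval g (pts ! j))"])
  show "\<forall>j<length pts. 0 \<le> w j * Re (peval g (pts ! j))"
    using weights_nonneg nonneg by simp
  have real: "peval g z = complex_of_real (Re (peval g z))" for z
    using peval_real[OF g] by (simp add: complex_is_Real_iff complex_eq_iff)
  show "\<forall>a\<in>midx n s. \<forall>b\<in>midx n s. loc_mat g (atomic_moments pts w) a b = (\<Sum>j<length pts.
      complex_of_real (w j * Re (peval g (pts ! j))) * cnj (cnj (zmon (pts ! j) a)) * cnj (zmon (pts ! j) b))"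
    using loc_mat_atomic_moments[OF g pts] real unfolding midx_def
    by (auto simp: mult.assoc intro!: sum.cong)
qed

lemma psd_block_atomic_moments: "psd ({0, 1, 2} \<times> midx n d) (block_mat n i j (atomic_moments pts w))"
proof (rule psd_gram[where f="\<lambda>k (p, a). cnj (zmon (pts ! k) a) * zmon (pts ! k) (bexp n i j p)" and c=w])
  show "\<forall>k<length pts. 0 \<le> w k" by (rule weights_nonneg)
  have "length (bexp n i j p) = n" for p
    unfolding bexp_def by simp
  then show "\<forall>pa\<in>{0, 1, 2} \<times> midx n d. \<forall>qb\<in>{0, 1, 2} \<times> midx n d.
      block_mat n i j (atomic_moments pts w) pa qb = (\<Sum>k<length pts. complex_of_real (w k)
        * cnj (case pa of (p, a) \<Rightarrow> cnj (zmon (pts ! k) a) * zmon (pts ! k) (bexp n i j p))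
        * (case qb of (p, a) \<Rightarrow> cnj (zmon (pts ! k) a) * zmon (pts ! k) (bexp n i j p)))"
    unfolding block_mat_def loc_mat_mono_poly atomic_moments_def midx_def
    by (auto simp: zmon_madd algebra_simps intro!: sum.cong)
qed

end

lemma mrank_atomic_moments_le: "finite I \<Longrightarrow> mrank I (atomic_moments pts w) \<le> length pts"
  by (rule mrank_le_if_factorization[where f="\<lambda>k a. complex_of_real (w k) * zmon (pts ! k) a"
        and h="\<lambda>k b. cnj (zmon (pts ! k) b)"])
    (auto simp: atomic_moments_def)

lemma mrank_atomic_moments_extension:
  assumes dN: "d \<le> N" and pts: "length pts = mrank (midx n d) y"
    and moments: "\<forall>\<alpha>\<in>midx n d. \<forall>\<beta>\<in>midx n d. y \<alpha> \<beta> = atomic_moments pts w \<alpha> \<beta>"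
  shows "mrank (midx n N) (atomic_moments pts w) = mrank (midx n d) y"
proof (rule antisym)
  show "mrank (midx n N) (atomic_moments pts w) \<le> mrank (midx n d) y"
    using mrank_atomic_moments_le[OF finite_midx] pts by metis
  obtain J where J: "J \<subseteq> midx n d" "cols_indep (midx n d) J y" "card J = mrank (midx n d) y"
    using mrank_witness[OF finite_midx] by blast
  have "cols_indep (midx n N) J (atomic_moments pts w)"
    by (rule cols_indep_mono_rows[OF J(2) midx_mono[OF dN]]) (use J(1) moments in auto)
  then show "mrank (midx n d) y \<le> mrank (midx n N) (atomic_moments pts w)"
    using J(1,3) midx_mono[OF dN] by (metis card_le_mrank finite_midx subset_trans)
qed

definition admissible_flat_extension :: "nat \<Rightarrow> nat \<Rightarrow> nat \<Rightarrow> (nat \<Rightarrow> cpoly) \<Rightarrow> cpoly \<Rightarrow> cpoly \<Rightarrow> bool"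
  where "admissible_flat_extension n d m g y y' \<longleftrightarrow>
       (\<forall>\<alpha>\<in>midx n d. \<forall>\<beta>\<in>midx n d. y' \<alpha> \<beta> = y \<alpha> \<beta>)
     \<and> psd (midx n (d + dK m g)) (mom_mat y')
     \<and> (\<forall>i<m. psd (midx n (d + dK m g - pdeg (g i))) (loc_mat (g i) y'))
     \<and> mrank (midx n (d + dK m g)) (mom_mat y') = mrank (midx n d) (mom_mat y)
     \<and> (\<forall>i j. i < j \<and> j < n \<longrightarrow> psd ({0, 1, 2} \<times> midx n d) (block_mat n i j y'))"

lemma atomic_repr_imp_admissible_flat_extension:
  assumes g: "\<forall>i<m. real_cpoly n (g i)"
    and repr: "atomic_repr n d (Kset n m g) (mrank (midx n d) (mom_mat y)) y"
  shows "\<exists>y'. admissible_flat_extension n d m g y y'"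
proof -
  obtain pts w where pts: "length pts = mrank (midx n d) y" "\<forall>j<length pts. pts ! j \<in> Kset n m g \<and> 0 < w j"
    and moments: "\<forall>\<alpha>\<in>midx n d. \<forall>\<beta>\<in>midx n d. y \<alpha> \<beta> = atomic_moments pts w \<alpha> \<beta>"
    using repr unfolding atomic_repr_altdef mom_mat_eq by metis
  have w: "\<forall>j<length pts. 0 \<le> w j" using pts by (simp add: less_imp_le)
  have in_K: "\<forall>j<length pts. length (pts ! j) = n \<and> (\<forall>i<m. 0 \<le> Re (peval (g i) (pts ! j)))"
    using pts unfolding Kset_def by auto
  have "admissible_flat_extension n d m g y (atomic_moments pts w)"
    unfolding admissible_flat_extension_def mom_mat_eq
    using moments psd_atomic_moments[OF w] psd_loc_atomic_moments[OF w] psd_block_atomic_moments[OF w]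
      mrank_atomic_moments_extension[OF le_add1 pts(1) moments] g in_K
    by simp
  then show ?thesis by blast
qed

section \<open>Degrees and the ball constraint\<close>

lemma two_le_dK: "2 \<le> dK m g"
  unfolding dK_def by (rule Max_ge) auto

lemma pdeg_le_dK: "i < m \<Longrightarrow> pdeg (g i) \<le> dK m g"
  unfolding dK_def by (rule Max_ge) auto

lemma psupp_degree_le_pdeg:
  assumes "real_cpoly n g" "(\<gamma>, \<delta>) \<in> psupp g"
  shows "mdeg \<gamma> \<le> pdeg g" "mdeg \<delta> \<le> pdeg g"
proof -
  have "finite (psupp g)" using assms(1) unfolding real_cpoly_def by auto
  moreover have "{max (mdeg \<alpha>) (mdeg \<beta>) | \<alpha> \<beta>. g \<alpha> \<beta> \<noteq> 0}
      = (\<lambda>(\<alpha>, \<beta>). max (mdeg \<alpha>) (mdeg \<beta>)) ` psupp g"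
    unfolding psupp_def by auto
  ultimately have "max (mdeg \<gamma>) (mdeg \<delta>) \<le> pdeg g"
    unfolding pdeg_def using assms(2) by (intro Max_ge) (auto simp: psupp_def)
  then show "mdeg \<gamma> \<le> pdeg g" "mdeg \<delta> \<le> pdeg g" by simp_all
qed

lemma psupp_ball_poly:
  assumes "R > 0"
  shows "psupp (ball_poly n R) = insert (mzero n, mzero n) ((\<lambda>k. (munit n k, munit n k)) ` {..<n})"
  unfolding psupp_def ball_poly_def using assms mzero_ne_munit by (auto split: if_splits)

lemma pdeg_ball_poly:
  assumes "R > 0"
  shows "pdeg (ball_poly n R) \<le> 1"
proof -
  define S where "S = {max (mdeg \<alpha>) (mdeg \<beta>) | \<alpha> \<beta>. ball_poly n R \<alpha> \<beta> \<noteq> 0}"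
  have "S \<subseteq> {0, 1}"
  proof
    fix x assume "x \<in> S"
    then obtain \<alpha> \<beta> where "x = max (mdeg \<alpha>) (mdeg \<beta>)" "ball_poly n R \<alpha> \<beta> \<noteq> 0"
      unfolding S_def by blast
    then show "x \<in> {0, 1}" unfolding ball_poly_def by (auto simp: mdeg_munit split: if_splits)
  qed
  then have "finite ({0} \<union> S)" "\<forall>x\<in>{0} \<union> S. x \<le> 1"
    using finite_subset by auto
  then show ?thesis unfolding pdeg_def S_def[symmetric] by (subst Max_le_iff) auto
qed

lemma loc_mat_ball_poly:
  assumes "R > 0"
  shows "loc_mat (ball_poly n R) y a b = complex_of_real (R\<^sup>2) * y (madd a (mzero n)) (madd b (mzero n))
      - (\<Sum>k<n. y (madd a (munit n k)) (madd b (munit n k)))"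
proof -
  have notin: "(mzero n, mzero n) \<notin> (\<lambda>k. (munit n k, munit n k)) ` {..<n}"
    using mzero_ne_munit by auto
  have inj: "inj_on (\<lambda>k. (munit n k, munit n k)) {..<n}"
    using munit_inj by (auto simp: inj_on_def)
  have "k < n \<Longrightarrow> ball_poly n R (munit n k) (munit n k) = -1" for k
    unfolding ball_poly_def using mzero_ne_munit by auto
  then show ?thesis
    unfolding loc_mat_def psupp_ball_poly[OF assms]
    by (simp add: sum.insert[OF _ notin] sum.reindex[OF inj] sum_negf ball_poly_def)
qed

section \<open>Flat extensions give atomic measures\<close>

text \<open>\<open>B\<close> indexes a basis of the column space of the flat moment matrix \<open>y\<close> of degree \<open>N\<close>.
  Columns are represented by their coordinates in this basis, the moment matrix becomes a
  positive definite inner product on coordinate vectors, and multiplication by \<open>z\<^sub>i\<close> becomes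
  the shift operator \<open>shift i\<close>.\<close>

locale flat_extension =
  fixes n d N :: nat and y :: cpoly and B :: "nat list set" and R :: real
  assumes basis_low_degree: "B \<subseteq> midx n d" and degree_gap: "d + 2 \<le> N"
    and psd_moments: "psd (midx n N) y"
    and basis_indep: "cols_indep (midx n N) B y"
    and basis_spans: "\<forall>a\<in>midx n N. \<exists>c. \<forall>x\<in>midx n N. y x a = (\<Sum>b\<in>B. y x b * c b)"
    and radius: "R > 0"
    and psd_ball: "psd (midx n (N - 1)) (loc_mat (ball_poly n R) y)"
begin

abbreviation ip where "ip \<equiv> sesq B y"

lemma basis_subset: "B \<subseteq> midx n N"
  using basis_low_degree midx_mono[of d N n] degree_gap by auto

lemma finite_basis: "finite B"
  using basis_low_degree finite_midx finite_subset by blast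

lemma length_basis: "b \<in> B \<Longrightarrow> length b = n"
  using basis_low_degree unfolding midx_def by auto

lemma hermitian: "\<forall>a\<in>midx n N. \<forall>b\<in>midx n N. y b a = cnj (y a b)"
  using psd_hermitian[OF psd_moments] by blast

lemma hermitian_basis: "\<forall>a\<in>B. \<forall>b\<in>B. y b a = cnj (y a b)"
  using hermitian basis_subset by blast

definition coord :: "nat list \<Rightarrow> nat list \<Rightarrow> complex" where
  "coord a = (\<lambda>b. if b \<in> B
     then (SOME c. \<forall>x\<in>midx n N. y x a = (\<Sum>b\<in>B. y x b * c b)) b else 0)"

lemma column_expansion:
  assumes "a \<in> midx n N"
  shows "\<forall>x\<in>midx n N. y x a = (\<Sum>b\<in>B. y x b * coord a b)"
proof -
  have "\<exists>c. \<forall>x\<in>midx n N. y x a = (\<Sum>b\<in>B. y x b * c b)" using basis_spans assms by blast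
  from someI_ex[OF this] show ?thesis unfolding coord_def by (simp cong: sum.cong)
qed

lemma coord_supported: "coord a \<in> supported B"
  unfolding coord_def supported_def by simp

lemma coord_basis:
  assumes b: "b \<in> B"
  shows "coord b = unit_vec b"
proof -
  have b_col: "b \<in> midx n N" using b basis_subset by auto
  have "\<forall>x\<in>midx n N. (\<Sum>b'\<in>B. y x b' * (coord b b' - unit_vec b b')) = 0"
  proof
    fix x assume x: "x \<in> midx n N"
    have "(\<Sum>b'\<in>B. y x b' * (coord b b' - unit_vec b b'))
        = (\<Sum>b'\<in>B. y x b' * coord b b') - (\<Sum>b'\<in>B. y x b' * unit_vec b b')"
      by (simp add: algebra_simps sum_subtractf)
    also have "\<dots> = 0"
      using column_expansion[OF b_col] x sum_unit_vec[OF finite_basis b] by simp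
    finally show "(\<Sum>b'\<in>B. y x b' * (coord b b' - unit_vec b b')) = 0" .
  qed
  then have "\<forall>b'\<in>B. coord b b' - unit_vec b b' = 0"
    using basis_indep[unfolded cols_indep_def, THEN spec[of _ "\<lambda>b'. coord b b' - unit_vec b b'"]]
    by blast
  moreover have "\<forall>b'. b' \<notin> B \<longrightarrow> coord b b' = unit_vec b b'"
    using b unfolding coord_def unit_vec_def by auto
  ultimately show ?thesis by (auto simp: fun_eq_iff)
qed

lemma moment_eq_ip_coord:
  assumes a: "a \<in> midx n N" and b: "b \<in> midx n N"
  shows "y a b = ip (coord a) (coord b)"
proof -
  have "ip (coord a) (coord b) = (\<Sum>a'\<in>B. cnj (coord a a') * (\<Sum>b'\<in>B. y a' b' * coord b b'))"
    unfolding sesq_def by (simp add: sum_distrib_left mult.assoc)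
  also have "\<dots> = (\<Sum>a'\<in>B. cnj (coord a a') * y a' b)"
    using column_expansion[OF b] basis_subset by (intro sum.cong refl) auto
  also have "\<dots> = (\<Sum>a'\<in>B. cnj (y b a' * coord a a'))"
    using hermitian basis_subset b by (intro sum.cong refl) (auto simp: mult.commute)
  also have "\<dots> = cnj (y b a)" using column_expansion[OF a] b by (simp add: cnj_sum)
  also have "\<dots> = y a b" using hermitian a b by (metis complex_cnj_cnj)
  finally show ?thesis ..
qed

lemma ip_nonneg: "0 \<le> Re (ip x x)"
  using psd_sesq_nonneg[OF psd_subset[OF psd_moments basis_subset finite_midx]] .

lemma ip_definite:
  assumes x: "x \<in> supported B" and zero: "ip x x = 0"
  shows "x = 0"
proof -
  have "sesq (midx n N) y x x = 0" using sesq_restrict[OF finite_midx basis_subset x x] zero by simp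
  then have kernel: "\<forall>a\<in>midx n N. (\<Sum>b\<in>midx n N. y a b * x b) = 0"
    using psd_sesq_zero_imp_kernel[OF psd_moments finite_midx] by simp
  have "\<forall>a\<in>midx n N. (\<Sum>b\<in>B. y a b * x b) = 0"
  proof
    fix a assume "a \<in> midx n N"
    moreover have "(\<Sum>b\<in>midx n N. y a b * x b) = (\<Sum>b\<in>B. y a b * x b)"
      using x basis_subset by (intro sum.mono_neutral_right finite_midx) (auto simp: supported_def)
    ultimately show "(\<Sum>b\<in>B. y a b * x b) = 0" using kernel by simp
  qed
  then have "\<forall>b\<in>B. x b = 0" using basis_indep unfolding cols_indep_def by blast
  then show ?thesis using x unfolding supported_def by (auto simp: fun_eq_iff zero_fun_apply)
qed

definition shift :: "nat \<Rightarrow> (nat list \<Rightarrow> complex) \<Rightarrow> (nat list \<Rightarrow> complex)" where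
  "shift i x = (\<Sum>b\<in>B. vscale (x b) (coord (madd b (munit n i))))"

lemma clinear_shift: "clinear (shift i)"
  by (rule clinearI) (auto simp: shift_def fun_eq_iff sum_fun_apply fun_vec_simps algebra_simps
      sum.distrib sum_distrib_left)

lemma shift_supported: "shift i x \<in> supported B"
  unfolding shift_def using coord_supported
  by (intro cvs.subspace_sum[OF subspace_supported] cvs.subspace_scale[OF subspace_supported])

lemma sesq_shifted_moments:
  assumes "finite I" "\<forall>a\<in>I. madd a \<gamma> \<in> midx n N" "\<forall>b\<in>I. madd b \<delta> \<in> midx n N"
  shows "(\<Sum>a\<in>I. \<Sum>b\<in>I. cnj (u a) * y (madd a \<gamma>) (madd b \<delta>) * v b)
     = ip (\<Sum>a\<in>I. vscale (u a) (coord (madd a \<gamma>))) (\<Sum>b\<in>I. vscale (v b) (coord (madd b \<delta>)))"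
  unfolding sesq_sum_left unfolding sesq_sum_right sesq_scale_left sesq_scale_right sum_distrib_left
  using assms by (intro sum.cong refl) (simp add: moment_eq_ip_coord mult.commute mult.left_commute)


definition coord_comb :: "nat list set \<Rightarrow> (nat list \<Rightarrow> complex) \<Rightarrow> nat list \<Rightarrow> (nat list \<Rightarrow> complex)"
  where "coord_comb J v \<gamma> = (\<Sum>\<alpha>\<in>J. vscale (v \<alpha>) (coord (madd \<alpha> \<gamma>)))"

lemma shift_eq_coord_comb: "shift i x = coord_comb B x (munit n i)"
  by (simp add: shift_def coord_comb_def)

lemma coord_comb_mzero: "x \<in> supported B \<Longrightarrow> coord_comb B x (mzero n) = x"
  unfolding coord_comb_def using supported_expansion[OF finite_basis]
  by (simp add: length_basis coord_basis cong: sum.cong)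

lemma coord_comb_unit_diff:
  assumes "finite J" "B \<subseteq> J" "a \<in> J"
  shows "coord_comb J (unit_vec a - (\<Sum>b\<in>B. vscale (coord a b) (unit_vec b))) \<gamma>
    = coord (madd a \<gamma>) - coord_comb B (coord a) \<gamma>"
proof (rule ext)
  fix x
  let ?h = "\<lambda>\<alpha>. coord (madd \<alpha> \<gamma>) x"
  have "coord_comb J (unit_vec a - (\<Sum>b\<in>B. vscale (coord a b) (unit_vec b))) \<gamma> x
      = (\<Sum>\<alpha>\<in>J. unit_vec a \<alpha> * ?h \<alpha>) - (\<Sum>b\<in>B. coord a b * (\<Sum>\<alpha>\<in>J. unit_vec b \<alpha> * ?h \<alpha>))"
    unfolding coord_comb_def
    by (simp add: sum_fun_apply fun_vec_simps sum_distrib_left sum_distrib_right algebra_simps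
        sum_subtractf sum.swap[of _ J])
  also have "\<dots> = ?h a - (\<Sum>b\<in>B. coord a b * ?h b)"
    using assms sum_unit_vec[OF assms(1), of _ ?h] by (simp add: mult.commute subset_iff)
  finally show "coord_comb J (unit_vec a - (\<Sum>b\<in>B. vscale (coord a b) (unit_vec b))) \<gamma> x
      = (coord (madd a \<gamma>) - coord_comb B (coord a) \<gamma>) x"
    by (simp add: coord_comb_def sum_fun_apply fun_vec_simps)
qed

lemma sesq_loc_ball_poly:
  assumes J: "finite J" "J \<subseteq> midx n (N - 1)"
  shows "sesq J (loc_mat (ball_poly n R) y) v v = complex_of_real (R\<^sup>2)
    * ip (coord_comb J v (mzero n)) (coord_comb J v (mzero n))
    - (\<Sum>k<n. ip (coord_comb J v (munit n k)) (coord_comb J v (munit n k)))"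
proof -
  have in_N: "madd \<alpha> \<gamma> \<in> midx n N" if "\<alpha> \<in> J" "length \<gamma> = n" "mdeg \<gamma> \<le> 1" for \<alpha> \<gamma>
    using that J degree_gap by (intro midx_madd[where s="N - 1"]) auto
  let ?Y = "\<lambda>\<gamma>. \<Sum>\<alpha>\<in>J. \<Sum>\<beta>\<in>J. cnj (v \<alpha>) * y (madd \<alpha> \<gamma>) (madd \<beta> \<gamma>) * v \<beta>"
  have "sesq J (loc_mat (ball_poly n R) y) v v
      = complex_of_real (R\<^sup>2) * ?Y (mzero n) - (\<Sum>k<n. ?Y (munit n k))"
    unfolding sesq_def loc_mat_ball_poly[OF radius]
    by (simp add: algebra_simps sum_distrib_left sum_distrib_right sum_subtractf
        sum.swap[of _ "{..<n}"])
  also have "\<dots> = complex_of_real (R\<^sup>2) * ip (coord_comb J v (mzero n)) (coord_comb J v (mzero n))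
    - (\<Sum>k<n. ip (coord_comb J v (munit n k)) (coord_comb J v (munit n k)))"
    unfolding coord_comb_def
    by (simp add: sesq_shifted_moments[OF J(1)] in_N mdeg_munit)
  finally show ?thesis .
qed

text \<open>The vector \<open>v\<close> below represents a vanishing combination of columns, and the localizing form
  of the ball constraint at \<open>v\<close> is minus the sum of the squared lengths of the defects
  \<open>V k\<close>; its positivity forces them to vanish.\<close>

lemma coord_shift:
  assumes a: "a \<in> midx n (N - 1)" and k: "k < n"
  shows "coord (madd a (munit n k)) = shift k (coord a)"
proof -
  define J where "J = midx n (N - 1)"
  have J: "finite J" "J \<subseteq> midx n (N - 1)" unfolding J_def by (simp_all add: finite_midx)
  have "d \<le> N - 1" using degree_gap by simp
  then have BJ: "B \<subseteq> J" unfolding J_def using basis_low_degree midx_mono by blast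
  have aJ: "a \<in> J" using a by (simp add: J_def)
  define v where "v = unit_vec a - (\<Sum>b\<in>B. vscale (coord a b) (unit_vec b))"
  define V where "V = (\<lambda>k'. coord (madd a (munit n k')) - shift k' (coord a))"
  have "coord_comb J v (mzero n) = 0"
    unfolding v_def coord_comb_unit_diff[OF J(1) BJ aJ] coord_comb_mzero[OF coord_supported]
    using a by (simp add: midx_def)
  moreover have "coord_comb J v (munit n k') = V k'" for k'
    unfolding v_def V_def coord_comb_unit_diff[OF J(1) BJ aJ] shift_eq_coord_comb ..
  ultimately have "sesq J (loc_mat (ball_poly n R) y) v v = - (\<Sum>k'<n. ip (V k') (V k'))"
    using sesq_loc_ball_poly[OF J] by simp
  moreover have "0 \<le> Re (sesq J (loc_mat (ball_poly n R) y) v v)"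
    using psd_ball by (simp add: J_def psd_sesq_nonneg)
  ultimately have "(\<Sum>k'<n. Re (ip (V k') (V k'))) \<le> 0" by simp
  then have "\<forall>k'\<in>{..<n}. Re (ip (V k') (V k')) = 0"
    using ip_nonneg by (subst sum_nonneg_eq_0_iff[symmetric]) (auto intro: sum_nonneg antisym)
  then have "ip (V k) (V k) = 0"
    using k sesq_diag_real[OF hermitian_basis, of "V k"] by simp
  moreover have "V k \<in> supported B"
    unfolding V_def using coord_supported shift_supported by (rule cvs.subspace_diff[OF subspace_supported])
  ultimately show ?thesis using ip_definite unfolding V_def by fastforce
qed

lemma shift_commute:
  assumes i: "i < n" and j: "j < n"
  shows "shift i (shift j x) = shift j (shift i x)"
proof -
  have shifted_basis: "madd b (munit n l) \<in> midx n (N - 1)" if "b \<in> B" "l < n" for b l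
    using that basis_low_degree degree_gap by (intro midx_madd[where s=d]) (auto simp: mdeg_munit)
  have shift_shift: "shift l (shift l' x) = (\<Sum>b\<in>B. vscale (x b) (coord (madd (madd b (munit n l')) (munit n l))))"
    if "l < n" "l' < n" for l l'
    unfolding shift_def[of l'] using that shifted_basis
    by (simp add: cvp.linear_sum[OF clinear_shift] cvp.linear_scale[OF clinear_shift] coord_shift
        cong: sum.cong)
  show ?thesis
    unfolding shift_shift[OF i j] shift_shift[OF j i] using length_basis
    by (intro sum.cong refl) (simp add: madd_assoc madd_commute[of "munit n j" "munit n i"])
qed


lemma sesq_block_mat:
  assumes P: "P \<subseteq> {0, 1, 2}" and vec: "\<forall>p\<in>P. vec p \<in> supported B"
  shows "sesq (P \<times> midx n d) (block_mat n i j y) (\<lambda>(p, a). vec p a) (\<lambda>(p, a). vec p a)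
    = (\<Sum>p\<in>P. \<Sum>q\<in>P. ip (coord_comb B (vec p) (bexp n i j q)) (coord_comb B (vec q) (bexp n i j p)))"
proof -
  have shifted: "madd a (bexp n i j p) \<in> midx n N" if "a \<in> B" for a p
    using that basis_low_degree degree_gap
    by (intro midx_madd[where s=d]) (auto simp: bexp_def mdeg_munit)
  have "sesq (P \<times> midx n d) (block_mat n i j y) (\<lambda>(p, a). vec p a) (\<lambda>(p, a). vec p a)
      = (\<Sum>p\<in>P. \<Sum>q\<in>P. sesq (midx n d) (\<lambda>a b. y (madd a (bexp n i j q)) (madd b (bexp n i j p)))
          (vec p) (vec q))"
  proof -
    have "sesq (P \<times> midx n d) (block_mat n i j y) (\<lambda>(p, a). vec p a) (\<lambda>(p, a). vec p a)
        = (\<Sum>p\<in>P. \<Sum>a\<in>midx n d. \<Sum>q\<in>P. \<Sum>b\<in>midx n d.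
            cnj (vec p a) * y (madd a (bexp n i j q)) (madd b (bexp n i j p)) * vec q b)"
    proof -
      have pairs: "(\<Sum>z\<in>A \<times> C. f z) = (\<Sum>p\<in>A. \<Sum>a\<in>C. f (p, a))"
        for A C and f :: "nat \<times> nat list \<Rightarrow> complex"
        by (simp add: sum.cartesian_product)
      show ?thesis unfolding sesq_def pairs block_mat_def loc_mat_mono_poly
        by (simp add: sum_distrib_left sum_distrib_right)
    qed
    then show ?thesis unfolding sesq_def by (simp add: sum.swap[of _ "midx n d" P])
  qed
  also have "\<dots> = (\<Sum>p\<in>P. \<Sum>q\<in>P. ip (coord_comb B (vec p) (bexp n i j q))
      (coord_comb B (vec q) (bexp n i j p)))"
    using P vec unfolding coord_comb_def
    by (intro sum.cong refl, subst sesq_restrict[OF finite_midx basis_low_degree])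
      (auto simp: sesq_def sesq_shifted_moments[OF finite_basis] shifted)
  finally show ?thesis .
qed

lemma shift_block_form_nonneg:
  assumes block: "psd ({0, 1, 2} \<times> midx n d) (block_mat n i j y)"
    and p: "p \<in> {1, 2}" "bexp n i j p = munit n k"
    and x: "x \<in> supported B" and w: "w \<in> supported B"
  shows "0 \<le> Re (ip x x + ip (shift k x) w + ip w (shift k x) + ip (shift k w) (shift k w))"
proof -
  define vec where "vec = (\<lambda>q::nat. if q = 0 then x else w)"
  have psd_pair: "psd ({0, p} \<times> midx n d) (block_mat n i j y)"
    by (rule psd_subset[OF block]) (use p finite_midx in auto)
  have "sesq ({0, p} \<times> midx n d) (block_mat n i j y) (\<lambda>(q, a). vec q a) (\<lambda>(q, a). vec q a)
      = (\<Sum>q\<in>{0, p}. \<Sum>q'\<in>{0, p}.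
          ip (coord_comb B (vec q) (bexp n i j q')) (coord_comb B (vec q') (bexp n i j q)))"
    by (rule sesq_block_mat) (use p x w in \<open>auto simp: vec_def\<close>)
  moreover have "bexp n i j 0 = mzero n" by (simp add: bexp_def)
  then have "(\<Sum>q\<in>{0, p}. \<Sum>q'\<in>{0, p}.
        ip (coord_comb B (vec q) (bexp n i j q')) (coord_comb B (vec q') (bexp n i j q)))
      = ip x x + ip (shift k x) w + ip w (shift k x) + ip (shift k w) (shift k w)"
    using p x w by (auto simp: vec_def coord_comb_mzero shift_eq_coord_comb add_ac)
  ultimately show ?thesis
    using psd_sesq_nonneg[OF psd_pair, of "\<lambda>(q, a). vec q a"] by (simp only:)
qed


lemma sesq_loc_mat:
  assumes g: "real_cpoly n g" "\<forall>(\<gamma>, \<delta>)\<in>psupp g. mdeg \<gamma> \<le> N - d \<and> mdeg \<delta> \<le> N - d"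
  shows "sesq B (loc_mat g y) x x
    = (\<Sum>(\<gamma>, \<delta>)\<in>psupp g. g \<gamma> \<delta> * ip (coord_comb B x \<gamma>) (coord_comb B x \<delta>))"
proof -
  have shifted: "madd b \<gamma> \<in> midx n N" if "b \<in> B" "length \<gamma> = n" "mdeg \<gamma> \<le> N - d" for b \<gamma>
    using that basis_low_degree degree_gap by (intro midx_madd[where s=d]) auto
  have supp: "\<forall>(\<gamma>, \<delta>)\<in>psupp g. length \<gamma> = n \<and> length \<delta> = n"
    using g(1) unfolding real_cpoly_def by auto
  let ?t = "\<lambda>a b p. g (fst p) (snd p) * (cnj (x a) * y (madd a (fst p)) (madd b (snd p)) * x b)"
  have "sesq B (loc_mat g y) x x = (\<Sum>a\<in>B. \<Sum>b\<in>B. \<Sum>p\<in>psupp g. ?t a b p)"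
    unfolding sesq_def loc_mat_def
    by (simp add: sum_distrib_left sum_distrib_right algebra_simps case_prod_beta)
  also have "\<dots> = (\<Sum>a\<in>B. \<Sum>p\<in>psupp g. \<Sum>b\<in>B. ?t a b p)"
    by (intro sum.cong refl) (rule sum.swap)
  also have "\<dots> = (\<Sum>p\<in>psupp g. \<Sum>a\<in>B. \<Sum>b\<in>B. ?t a b p)"
    by (rule sum.swap)
  also have "\<dots> = (\<Sum>(\<gamma>, \<delta>)\<in>psupp g. g \<gamma> \<delta> *
      (\<Sum>a\<in>B. \<Sum>b\<in>B. cnj (x a) * y (madd a \<gamma>) (madd b \<delta>) * x b))"
    by (simp add: sum_distrib_left case_prod_beta)
  also have "\<dots> = (\<Sum>(\<gamma>, \<delta>)\<in>psupp g. g \<gamma> \<delta> * ip (coord_comb B x \<gamma>) (coord_comb B x \<delta>))"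
    unfolding coord_comb_def
  proof (intro sum.cong refl, clarify)
    fix \<gamma> \<delta> assume "(\<gamma>, \<delta>) \<in> psupp g"
    then have "length \<gamma> = n" "mdeg \<gamma> \<le> N - d" "length \<delta> = n" "mdeg \<delta> \<le> N - d"
      using g(2) supp by auto
    then have "\<forall>a\<in>B. madd a \<gamma> \<in> midx n N" "\<forall>b\<in>B. madd b \<delta> \<in> midx n N"
      using shifted by auto
    then show "g \<gamma> \<delta> * (\<Sum>a\<in>B. \<Sum>b\<in>B. cnj (x a) * y (madd a \<gamma>) (madd b \<delta>) * x b)
        = g \<gamma> \<delta> * ip (\<Sum>\<alpha>\<in>B. vscale (x \<alpha>) (coord (madd \<alpha> \<gamma>)))
            (\<Sum>\<alpha>\<in>B. vscale (x \<alpha>) (coord (madd \<alpha> \<delta>)))"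
      by (simp add: sesq_shifted_moments[OF finite_basis])
  qed
  finally show ?thesis .
qed

end

locale flat_extension_blocks = flat_extension +
  assumes several_variables: "n > 1"
    and psd_blocks: "\<forall>i j. i < j \<and> j < n \<longrightarrow> psd ({0, 1, 2} \<times> midx n d) (block_mat n i j y)"
begin

text \<open>Every coordinate occurs in some block, because there are at least two coordinates.\<close>

lemma shift_form_nonneg:
  assumes k: "k < n" and x: "x \<in> supported B" and w: "w \<in> supported B"
  shows "0 \<le> Re (ip x x + ip (shift k x) w + ip w (shift k x) + ip (shift k w) (shift k w))"
proof (cases "k = 0")
  case True
  then have "psd ({0, 1, 2} \<times> midx n d) (block_mat n 0 1 y)" "bexp n 0 1 1 = munit n k"
    using psd_blocks several_variables by (auto simp: bexp_def)
  then show ?thesis using shift_block_form_nonneg x w by blast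
next
  case False
  then have "psd ({0, 1, 2} \<times> midx n d) (block_mat n 0 k y)" "bexp n 0 k 2 = munit n k"
    using psd_blocks k by (auto simp: bexp_def)
  then show ?thesis using shift_block_form_nonneg x w by blast
qed

sublocale normal: commuting_normal_ops B y n shift
proof unfold_locales
  show "finite B" by (rule finite_basis)
  show "\<forall>a\<in>B. \<forall>b\<in>B. y b a = cnj (y a b)" by (rule hermitian_basis)
  show "\<forall>x. 0 \<le> Re (ip x x)" using ip_nonneg by blast
  show "\<forall>x\<in>supported B. ip x x = 0 \<longrightarrow> x = 0" using ip_definite by blast
  show "\<forall>i<n. clinear (shift i)" using clinear_shift by blast
  show "\<forall>i<n. \<forall>x. shift i x \<in> supported B" using shift_supported by blast
  show "\<forall>i<n. \<forall>j<n. \<forall>x. shift i (shift j x) = shift j (shift i x)" using shift_commute by blast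
  show "\<forall>i<n. \<forall>e\<in>supported B. \<forall>\<mu>. shift i e = vscale \<mu> e \<longrightarrow>
      (\<forall>x\<in>supported B. ip e (shift i x) = \<mu> * ip e x)"
    using eigenvector_of_adjoint[OF hermitian_basis clinear_shift] ip_nonneg shift_form_nonneg
    by blast
qed

context
  fixes e lam L
  assumes eigenbasis: "normal.eigenbasis e lam L"
begin

definition eigenvalues :: "nat \<Rightarrow> complex list" where
  "eigenvalues j = map (lam j) [0..<n]"

lemma length_eigenvalues [simp]: "length (eigenvalues j) = n"
  by (simp add: eigenvalues_def)

lemma eigenvector:
  assumes "j < L"
  shows "e j \<in> supported B" "\<forall>i<n. shift i (e j) = vscale (lam j i) (e j)" "ip (e j) (e j) = 1"
  using eigenbasis assms unfolding normal.eigenbasis_def normal.orthonormal_eigen_def by auto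

lemma ip_eigenvector_coord:
  assumes j: "j < L"
  shows "a \<in> midx n d \<Longrightarrow> ip (e j) (coord a) = zmon (eigenvalues j) a * ip (e j) (coord (mzero n))"
proof (induction "mdeg a" arbitrary: a rule: less_induct)
  case less
  have len: "length a = n" using less.prems unfolding midx_def by simp
  show ?case
  proof (cases "mdeg a = 0")
    case True
    then show ?thesis using mdeg_eq_0_iff[OF len] by simp
  next
    case False
    then obtain k a' where a: "k < n" "a = madd a' (munit n k)" "length a' = n" "mdeg a = Suc (mdeg a')"
      using mdeg_pos_decompose[OF len] by blast
    have "a' \<in> midx n d" using a less.prems unfolding midx_def by simp
    moreover have "d \<le> N - 1" using degree_gap by simp
    ultimately have "a' \<in> midx n (N - 1)" using midx_mono by blast
    then have "ip (e j) (coord a) = lam j k * ip (e j) (coord a')"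
      using a coord_shift normal.adjoint_eigen eigenvector[OF j] coord_supported by simp
    also have "\<dots> = zmon (eigenvalues j) a * ip (e j) (coord (mzero n))"
      using less.hyps[of a'] a \<open>a' \<in> midx n d\<close>
      by (simp add: zmon_madd zmon_munit eigenvalues_def)
    finally show ?thesis .
  qed
qed

lemma coord_comb_eigenvector:
  assumes j: "j < L"
  shows "length \<gamma> = n \<Longrightarrow> mdeg \<gamma> \<le> N - d \<Longrightarrow>
    coord_comb B (e j) \<gamma> = vscale (zmon (eigenvalues j) \<gamma>) (e j)"
proof (induction "mdeg \<gamma>" arbitrary: \<gamma> rule: less_induct)
  case less
  show ?case
  proof (cases "mdeg \<gamma> = 0")
    case True
    then show ?thesis
      using less.prems mdeg_eq_0_iff coord_comb_mzero eigenvector(1)[OF j] by simp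
  next
    case False
    then obtain k \<gamma>' where \<gamma>: "k < n" "\<gamma> = madd \<gamma>' (munit n k)" "length \<gamma>' = n"
      "mdeg \<gamma> = Suc (mdeg \<gamma>')"
      using mdeg_pos_decompose less.prems by blast
    have low: "madd b \<gamma>' \<in> midx n (N - 1)" if "b \<in> B" for b
      using that basis_low_degree \<gamma> less.prems degree_gap
      by (intro midx_madd[where s=d]) (auto simp: midx_def)
    have "coord_comb B (e j) \<gamma> = (\<Sum>b\<in>B. vscale (e j b) (shift k (coord (madd b \<gamma>'))))"
      unfolding coord_comb_def \<gamma>(2) using low length_basis \<gamma>(1,3)
      by (intro sum.cong refl) (simp add: madd_assoc[symmetric] coord_shift)
    also have "\<dots> = shift k (coord_comb B (e j) \<gamma>')"
      unfolding coord_comb_def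
      by (simp add: cvp.linear_sum[OF clinear_shift] cvp.linear_scale[OF clinear_shift])
    also have "\<dots> = vscale (zmon (eigenvalues j) \<gamma>' * lam j k) (e j)"
      using less.hyps[of \<gamma>'] \<gamma> less.prems eigenvector(2)[OF j]
      by (simp add: cvp.linear_scale[OF clinear_shift])
    also have "zmon (eigenvalues j) \<gamma>' * lam j k = zmon (eigenvalues j) \<gamma>"
      using \<gamma> by (simp add: zmon_madd zmon_munit eigenvalues_def)
    finally show ?thesis .
  qed
qed


definition point :: "nat \<Rightarrow> complex list" where
  "point j = map cnj (eigenvalues j)"

definition weight :: "nat \<Rightarrow> real" where
  "weight j = (cmod (ip (e j) (coord (mzero n))))\<^sup>2"

lemma length_point: "length (point j) = n"
  by (simp add: point_def)

lemma zmon_point: "length a = n \<Longrightarrow> zmon (point j) a = cnj (zmon (eigenvalues j) a)"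
  by (simp add: point_def zmon_map_cnj)

lemma ip_eigenvector_expansion:
  assumes j: "j < L" and x: "x \<in> supported B"
  shows "ip (e j) x = (\<Sum>b\<in>B. x b * zmon (eigenvalues j) b) * ip (e j) (coord (mzero n))"
proof -
  have "ip (e j) x = (\<Sum>b\<in>B. x b * ip (e j) (unit_vec b))"
    by (subst supported_expansion[OF finite_basis x, symmetric]) (simp add: sesq_sum_right sesq_scale_right)
  also have "\<dots> = (\<Sum>b\<in>B. x b * (zmon (eigenvalues j) b * ip (e j) (coord (mzero n))))"
    using ip_eigenvector_coord[OF j] basis_low_degree
    by (intro sum.cong refl) (auto simp: coord_basis[symmetric])
  also have "\<dots> = (\<Sum>b\<in>B. x b * zmon (eigenvalues j) b) * ip (e j) (coord (mzero n))"
    by (simp add: sum_distrib_right mult.assoc)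
  finally show ?thesis .
qed

lemma weight_pos:
  assumes j: "j < L"
  shows "0 < weight j"
proof -
  have "ip (e j) (coord (mzero n)) \<noteq> 0"
    using ip_eigenvector_expansion[OF j eigenvector(1)[OF j]] eigenvector(3)[OF j] by auto
  then show ?thesis unfolding weight_def by simp
qed

text \<open>Distinct joint eigenvectors have distinct eigenvalues: otherwise their inner products
  with \<open>e j\<close> would be proportional, with factors \<open>ip (e j) (coord (mzero n)) \<noteq> 0\<close>.\<close>

lemma point_inj:
  assumes j: "j < L" and k: "k < L" and eq: "point j = point k"
  shows "j = k"
proof (rule ccontr)
  assume "j \<noteq> k"
  have "eigenvalues j = eigenvalues k"
    using arg_cong[OF eq, of "map cnj"] by (simp add: point_def map_idI)
  then have "(\<Sum>b\<in>B. e j b * zmon (eigenvalues j) b) * ip (e k) (coord (mzero n)) = 0"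
    using ip_eigenvector_expansion[OF k eigenvector(1)[OF j]] eigenbasis j k \<open>j \<noteq> k\<close>
    unfolding normal.eigenbasis_def normal.orthonormal_eigen_def by simp
  moreover have "ip (e k) (coord (mzero n)) \<noteq> 0"
    using weight_pos[OF k] unfolding weight_def by auto
  ultimately show False
    using ip_eigenvector_expansion[OF j eigenvector(1)[OF j]] eigenvector(3)[OF j] by simp
qed

lemma moments_eq_atomic_moments:
  assumes "\<alpha> \<in> midx n d" "\<beta> \<in> midx n d"
  shows "y \<alpha> \<beta> = atomic_moments (map point [0..<L]) weight \<alpha> \<beta>"
proof -
  have N: "\<alpha> \<in> midx n N" "\<beta> \<in> midx n N" and len: "length \<alpha> = n" "length \<beta> = n"
    using assms midx_mono[of d N n] degree_gap unfolding midx_def by auto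
  have "y \<alpha> \<beta> = (\<Sum>j<L. cnj (ip (e j) (coord \<alpha>)) * ip (e j) (coord \<beta>))"
    using moment_eq_ip_coord[OF N] normal.parseval[OF eigenbasis coord_supported coord_supported]
    by simp
  also have "\<dots> = atomic_moments (map point [0..<L]) weight \<alpha> \<beta>"
    unfolding atomic_moments_def
    by (intro sum.cong) (auto simp: ip_eigenvector_coord assms weight_def zmon_point len
        norm_square_cnj(2)[symmetric] mult_ac)
  finally show ?thesis .
qed

lemma point_in_localizing_set:
  assumes j: "j < L"
    and g: "real_cpoly n g" "\<forall>(\<gamma>, \<delta>)\<in>psupp g. mdeg \<gamma> \<le> N - d \<and> mdeg \<delta> \<le> N - d"
    and s: "d \<le> s" "psd (midx n s) (loc_mat g y)"
  shows "0 \<le> Re (peval g (point j))"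
proof -
  have supp: "\<forall>(\<gamma>, \<delta>)\<in>psupp g. length \<gamma> = n \<and> length \<delta> = n"
    using g(1) unfolding real_cpoly_def by auto
  have "sesq (midx n s) (loc_mat g y) (e j) (e j) = sesq B (loc_mat g y) (e j) (e j)"
    using basis_low_degree midx_mono[OF s(1)] eigenvector(1)[OF j]
    by (intro sesq_restrict finite_midx) auto
  also have "\<dots> = (\<Sum>(\<gamma>, \<delta>)\<in>psupp g. g \<gamma> \<delta> * ip (coord_comb B (e j) \<gamma>) (coord_comb B (e j) \<delta>))"
    by (rule sesq_loc_mat[OF g])
  also have "\<dots> = peval g (point j)"
    unfolding peval_def
  proof (intro sum.cong refl, clarify)
    fix \<gamma> \<delta> assume "(\<gamma>, \<delta>) \<in> psupp g"
    then have "length \<gamma> = n" "mdeg \<gamma> \<le> N - d" "length \<delta> = n" "mdeg \<delta> \<le> N - d"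
      using g(2) supp by auto
    then show "g \<gamma> \<delta> * ip (coord_comb B (e j) \<gamma>) (coord_comb B (e j) \<delta>)
        = g \<gamma> \<delta> * zmon (point j) \<gamma> * cnj (zmon (point j) \<delta>)"
      by (simp add: coord_comb_eigenvector[OF j] sesq_linear_simps eigenvector(3)[OF j]
          zmon_point mult_ac)
  qed
  finally show ?thesis using psd_sesq_nonneg[OF s(2), of "e j"] by simp
qed

end


lemma atomic_repr_basis_card:
  assumes constraints: "\<forall>i<m. real_cpoly n (g i) \<and> d \<le> s i \<and> psd (midx n (s i)) (loc_mat (g i) y)
      \<and> (\<forall>(\<gamma>, \<delta>)\<in>psupp (g i). mdeg \<gamma> \<le> N - d \<and> mdeg \<delta> \<le> N - d)"
  shows "atomic_repr n d (Kset n m g) (card B) y"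
proof -
  obtain e lam L where basis: "normal.eigenbasis e lam L"
    using normal.eigenbasis_exists by blast
  have "L = card B" by (rule normal.eigenbasis_length[OF basis])
  moreover have "distinct (map (point lam) [0..<L])"
    using point_inj[OF basis] by (auto simp: distinct_map inj_on_def)
  moreover have "\<forall>j<L. point lam j \<in> Kset n m g \<and> 0 < weight e j"
    using point_in_localizing_set[OF basis] weight_pos[OF basis] constraints
    by (auto simp: Kset_def length_point[OF basis] peval_real)
  ultimately show ?thesis
    unfolding atomic_repr_altdef using moments_eq_atomic_moments[OF basis]
    by (intro exI[of _ "map (point lam) [0..<L]"] exI[of _ "weight e"]) auto
qed

end


lemma atomic_repr_cong:
  assumes "\<forall>\<alpha>\<in>midx n d. \<forall>\<beta>\<in>midx n d. y' \<alpha> \<beta> = y \<alpha> \<beta>"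
  shows "atomic_repr n d K r y' \<longleftrightarrow> atomic_repr n d K r y"
  using assms unfolding atomic_repr_def by simp

lemma admissible_flat_extension_imp_atomic_repr:
  assumes n: "n > 1" and g: "\<forall>i<m. real_cpoly n (g i)"
    and R: "R > 0" and ball: "\<exists>i<m. g i = ball_poly n R"
    and ext: "admissible_flat_extension n d m g y y'"
  shows "atomic_repr n d (Kset n m g) (mrank (midx n d) (mom_mat y)) y"
proof -
  have agree: "\<forall>\<alpha>\<in>midx n d. \<forall>\<beta>\<in>midx n d. y' \<alpha> \<beta> = y \<alpha> \<beta>"
    and psd: "psd (midx n (d + dK m g)) y'"
    and loc: "\<forall>i<m. psd (midx n (d + dK m g - pdeg (g i))) (loc_mat (g i) y')"
    and rank: "mrank (midx n (d + dK m g)) y' = mrank (midx n d) y"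
    and blocks: "\<forall>i j. i < j \<and> j < n \<longrightarrow> psd ({0, 1, 2} \<times> midx n d) (block_mat n i j y')"
    using ext unfolding admissible_flat_extension_def by simp_all
  define N where "N = d + dK m g"
  have dN: "d + 2 \<le> N" using two_le_dK[of m g] unfolding N_def by simp
  then have low: "midx n d \<subseteq> midx n N" by (intro midx_mono) simp
  obtain B where B: "B \<subseteq> midx n d" "cols_indep (midx n d) B y" "card B = mrank (midx n d) y"
    using mrank_witness[OF finite_midx] by blast
  have indep: "cols_indep (midx n N) B y'"
    by (rule cols_indep_mono_rows[OF B(2) low]) (use B(1) agree in auto)
  have spans: "\<forall>a\<in>midx n N. \<exists>c. \<forall>x\<in>midx n N. y' x a = (\<Sum>b\<in>B. y' x b * c b)"
    using columns_in_span_if_mrank_eq_card[OF finite_midx _ indep] B(1,3) low rank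
    unfolding N_def by auto
  obtain i where i: "i < m" "g i = ball_poly n R" using ball by blast
  have "N - 1 \<le> N - pdeg (g i)" using pdeg_ball_poly[OF R, of n] i(2) by simp
  then have "psd (midx n (N - 1)) (loc_mat (ball_poly n R) y')"
    using loc i unfolding N_def by (metis psd_subset midx_mono finite_midx)
  then interpret flat_extension_blocks n d N y' B R
    using B(1) dN psd indep spans R n blocks unfolding N_def by unfold_locales auto
  have "atomic_repr n d (Kset n m g) (card B) y'"
  proof (rule atomic_repr_basis_card[where s="\<lambda>i. N - pdeg (g i)"], intro allI impI conjI)
    fix i assume i: "i < m"
    show "real_cpoly n (g i)" using g i by blast
    show "d \<le> N - pdeg (g i)" using pdeg_le_dK[OF i, of g] unfolding N_def by simp
    show "psd (midx n (N - pdeg (g i))) (loc_mat (g i) y')" using loc i unfolding N_def by blast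
    show "\<forall>(\<gamma>, \<delta>)\<in>psupp (g i). mdeg \<gamma> \<le> N - d \<and> mdeg \<delta> \<le> N - d"
      using psupp_degree_le_pdeg[OF g[rule_format, OF i]] pdeg_le_dK[OF i, of g] unfolding N_def
      by fastforce
  qed
  then show ?thesis using atomic_repr_cong[OF agree] B(3) by simp
qed

theorem theorem5p1:
  fixes n d m :: nat and y :: cpoly and g :: "nat \<Rightarrow> cpoly" and R :: real
  assumes "n > 1" and "d \<ge> 1"
    and "\<forall>i<m. real_cpoly n (g i)"
    and "R > 0" and "\<exists>i<m. g i = ball_poly n R"
  shows "atomic_repr n d (Kset n m g) (mrank (midx n d) (mom_mat y)) y
    \<longleftrightarrow>
    (\<exists>y' :: cpoly.
       (\<forall>\<alpha>\<in>midx n d. \<forall>\<beta>\<in>midx n d. y' \<alpha> \<beta> = y \<alpha> \<beta>)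
     \<and> psd (midx n (d + dK m g)) (mom_mat y')
     \<and> (\<forall>i<m. psd (midx n (d + dK m g - pdeg (g i))) (loc_mat (g i) y'))
     \<and> mrank (midx n (d + dK m g)) (mom_mat y') = mrank (midx n d) (mom_mat y)
     \<and> (\<forall>i j. i < j \<and> j < n \<longrightarrow> psd ({0, 1, 2} \<times> midx n d) (block_mat n i j y')))"
  unfolding admissible_flat_extension_def[symmetric]
  using atomic_repr_imp_admissible_flat_extension[OF assms(3)]
    admissible_flat_extension_imp_atomic_repr[OF assms(1,3,4,5)]
  by blast

end
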